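(* For all sufficiently large $k$ the following holds. Let $\tau=k^{-13}$, $d=4^k$ and $t=\frac1{\tau^2}\big(\lceil4k^2\ln(2k)\rceil\lceil4\ln(1/\tau)\rceil+\ln(1/\tau)+10\ln d\big)$. Let $e=(v_1,\dots,v_k)$ be a hyperedge of a $k$-Label Cover instance such that $|(\pi^{v_i,e})^{-1}(l)|\le d$ for all $i\in[k]$, $l\in[N]$. Let $h(\vec y)=\mathrm{sgn}(\sum_{i\in[k]}\langle\vec w_i,\vec y_{v_i}\rangle-\theta)$ with $\vec w_i\in\mathbb R^M$, and let $r\in[k]$ satisfy $|C_\tau(\vec w_r)|\ge t$. Define $\tilde{\vec w}_r=\mathrm{truncate}(\vec w_r,B_t(\vec w_r))$, $\tilde{\vec w}_i=\vec w_i$ for $i\ne r$, $\vec a_r=\vec w_r-\tilde{\vec w}_r$, $\tilde\theta=\theta-\mathbb E_{\mathcal E_e}[\langle\vec a_r,\vec y_{v_r}\rangle\mid b=0]$, and $\tilde h(\vec y)=\mathrm{sgn}(\sum_{i\in[k]}\langle\tilde{\vec w}_i,\vec y_{v_i}\rangle-\tilde\theta)$. Then for each $b\in\{0,1\}$, $$\Big|\mathbb E_{\mathcal E_e}[\tilde h(\vec y)\mid b]-\mathbb E_{\mathcal E_e}[h(\vec y)\mid b]\Big|\le\frac1{k^2}.$$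
   Context: $\mathrm{sgn}(t)=1$ if $t\ge0$, else $0$. A $k$-Label Cover instance is a $k$-uniform hypergraph on $V$ with a multiset $E$ of hyperedges $e=(v_1,\dots,v_k)$ of distinct vertices, each with projections $\pi^{v_i,e}:[M]\to[N]$. Fix distributions $\mathcal D_0,\mathcal D_1$ on $\{0,1\}^k$ with matching moments up to degree $4$ (i.e. $\mathbb E[\prod_{i\in S}x_i]$ agrees under both for every multiset $S\subseteq[k]$ with $|S|\le4$). $\mathcal E_e$ is the distribution of $(\vec y,b)$, $\vec y\in\{0,1\}^{V\times M}$: $b$ a uniform bit; $\vec x=(x_i^{(l)})_{i\in[k],l\in[N]}$ with $N$ columns i.i.d. from $\mathcal D_b$; $\vec y_v=\vec0$ for $v\notin e$; independently for each $i\in[k],j\in[M]$, $y_{v_i}^{(j)}=x_i^{(\pi^{v_i,e}(j))}$ w.p. $1-1/k^2$ and a fresh uniform bit w.p. $1/k^2$. For $\vec u\in\mathbb R^n$ order indices $i_1,\dots,i_n$ by decreasing $|u^{(i)}|$ (ties by increasing index); $B_t(\vec u)=\{i_1,\dots,i_{\min(t,n)}\}$ (with $t$ rounded down if not an integer); $\sigma_m^2=\sum_{j\ge m}|u^{(i_j)}|^2$; $c_\tau(\vec u)$ is the smallest $m$ with $|u^{(i_m)}|\le\tau\sigma_m$ ($+\infty$ if none); $C_\tau(\vec u)=\{i_1,\dots,i_{c_\tau(\vec u)-1}\}$ if finite, else $[n]$. $\mathrm{truncate}(\vec u,S)$ agrees with $\vec u$ on $S$ and is $0$ elsewhere. *)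

theory Defs
  imports "HOL-Probability.Probability" "HOL-Library.Multiset"
begin

(* Conventions: [n] = {0..<n} (0-based). Vectors in R^n are functions nat => real,
   only the coordinates < n matter. *)

definition sgn01 :: "real \<Rightarrow> real" where
  "sgn01 t = (if t \<ge> 0 then 1 else 0)"

(* indices 0..<n ordered by decreasing |u i|, ties broken by increasing index
   (sort_key is a stable insertion sort, and [0..<n] is increasing) *)
definition idx_order :: "nat \<Rightarrow> (nat \<Rightarrow> real) \<Rightarrow> nat list" where
  "idx_order n u = sort_key (\<lambda>i. - \<bar>u i\<bar>) [0..<n]"

definition Bset :: "real \<Rightarrow> nat \<Rightarrow> (nat \<Rightarrow> real) \<Rightarrow> nat set" where
  "Bset t n u = set (take (nat \<lfloor>t\<rfloor>) (idx_order n u))"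

(* sigma_m^2 with 0-based position m: sum over positions j >= m *)
definition sigma2 :: "nat \<Rightarrow> (nat \<Rightarrow> real) \<Rightarrow> nat \<Rightarrow> real" where
  "sigma2 n u m = (\<Sum>j\<in>{m..<n}. (u (idx_order n u ! j))\<^sup>2)"

(* C_tau(u): with 0-based position m0 = c_tau - 1 *)
definition Cset :: "real \<Rightarrow> nat \<Rightarrow> (nat \<Rightarrow> real) \<Rightarrow> nat set" where
  "Cset \<tau> n u =
     (let ord = idx_order n u;
          P = (\<lambda>m. m < n \<and> \<bar>u (ord ! m)\<bar> \<le> \<tau> * sqrt (sigma2 n u m))
      in if \<exists>m. P m then set (take (LEAST m. P m) ord) else {..<n})"

definition truncate :: "(nat \<Rightarrow> real) \<Rightarrow> nat set \<Rightarrow> nat \<Rightarrow> real" where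
  "truncate u S = (\<lambda>i. if i \<in> S then u i else 0)"

(* noise for one coordinate: None = copy (prob 1-1/k^2), Some c = fresh uniform bit c *)
definition noise_pmf :: "nat \<Rightarrow> bool option pmf" where
  "noise_pmf k = bind_pmf (bernoulli_pmf (1 / (real k)\<^sup>2))
     (\<lambda>f. if f then map_pmf Some (bernoulli_pmf (1/2)) else return_pmf None)"

(* The distribution E_e conditioned on the bit b (False = 0, True = 1).
   Hyperedge e = (vs 0, ..., vs (k-1)); pi i = pi^{v_i,e}; D b = D_b on {0,1}^k.
   y v j = y_v^{(j)}; X l i = x_i^{(l)}. *)
definition edge_dist :: "nat \<Rightarrow> nat \<Rightarrow> nat \<Rightarrow> (nat \<Rightarrow> nat) \<Rightarrow> (nat \<Rightarrow> nat \<Rightarrow> nat)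
    \<Rightarrow> (bool \<Rightarrow> (nat \<Rightarrow> bool) pmf) \<Rightarrow> bool \<Rightarrow> (nat \<Rightarrow> nat \<Rightarrow> bool) pmf" where
  "edge_dist k N M vs \<pi> D b =
     bind_pmf (Pi_pmf {..<N} (\<lambda>_. False) (\<lambda>_. D b)) (\<lambda>X.
       map_pmf (\<lambda>Z v j.
           if v \<in> vs ` {..<k} \<and> j < M then
             (let i = inv_into {..<k} vs v in
               case Z (i, j) of None \<Rightarrow> X (\<pi> i j) i | Some c \<Rightarrow> c)
           else False)
         (Pi_pmf ({..<k} \<times> {..<M}) None (\<lambda>_. noise_pmf k)))"

definition ip :: "nat \<Rightarrow> (nat \<Rightarrow> real) \<Rightarrow> (nat \<Rightarrow> bool) \<Rightarrow> real" where
  "ip M w y = (\<Sum>j<M. w j * of_bool (y j))"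

end

(* Write <w_r, y> = <wt_r, y> + T(y), where T(y) = <a, y> is the truncated tail. With mu the common
   mean of T under b = 0 and b = 1 (first moments of D_0 and D_1 agree), the threshold function obeys
     |sgn(A) - sgn(A + T - mu)| <= (T - mu)^2 / delta^2 + [|A| < delta],
   so the error is at most Var(T)/delta^2 + P(|A| < delta). The variance splits into a noise part
   (at most |a|^2) and a column part (at most d |a|^2, as at most d labels copy the same column).
   For the small-ball probability we pick L positions of B_t, spaced G apart inside C_tau, whose
   weights halve from one to the next; resampling the noise on them moves A by a signed sum that is
   never smaller than the last weight, so P(|A| < delta) <= (1 - 1/(2k^2))^L. Inside C_tau the tail
   mass decays geometrically, which bounds |a|^2 in terms of the last chosen weight. *)

theory Submission
  imports Defs "HOL-Real_Asymp.Real_Asymp"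
begin

lemma integrable_pmf_bounded:
  fixes f :: "'a \<Rightarrow> real"
  assumes "\<And>x. \<bar>f x\<bar> \<le> B"
  shows "integrable (measure_pmf p) f"
  by (rule measure_pmf.integrable_const_bound[where B=B]) (use assms in auto)

lemma abs_expectation_le_bound:
  fixes f :: "'a \<Rightarrow> real"
  assumes "\<And>x. \<bar>f x\<bar> \<le> B"
  shows "\<bar>measure_pmf.expectation p f\<bar> \<le> B"
proof -
  have "\<bar>measure_pmf.expectation p f\<bar> \<le> measure_pmf.expectation p (\<lambda>x. \<bar>f x\<bar>)"
    using integral_norm_bound[of p f] by simp
  also have "\<dots> \<le> measure_pmf.expectation p (\<lambda>x. B)"
    by (rule integral_mono) (use assms in \<open>auto intro!: integrable_pmf_bounded[where B=B]\<close>)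
  finally show ?thesis by simp
qed

lemma expectation_mono_bounded:
  fixes f g :: "'a \<Rightarrow> real"
  assumes "\<And>x. \<bar>f x\<bar> \<le> B" "\<And>x. \<bar>g x\<bar> \<le> B" "\<And>x. f x \<le> g x"
  shows "measure_pmf.expectation p f \<le> measure_pmf.expectation p g"
  by (rule integral_mono) (use assms in \<open>auto intro: integrable_pmf_bounded\<close>)

lemma expectation_affine_bounded:
  fixes f :: "'a \<Rightarrow> real"
  assumes "\<And>x. \<bar>f x\<bar> \<le> B"
  shows "measure_pmf.expectation p (\<lambda>x. c + u * f x) = c + u * measure_pmf.expectation p f"
proof -
  have "integrable (measure_pmf p) f" by (rule integrable_pmf_bounded[OF assms])
  then show ?thesis by simp
qed

lemma prob_eq_expectation_indicator: "measure_pmf.prob p E = measure_pmf.expectation p (indicator E)"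
  by simp

lemma expectation_of_bool: "measure_pmf.expectation p (\<lambda>x. of_bool (P x) :: real) = measure_pmf.prob p {x. P x}"
proof -
  have "(\<lambda>x. of_bool (P x) :: real) = indicator {x. P x}" by (auto simp: fun_eq_iff indicator_def)
  then show ?thesis by simp
qed

lemma expectation_bind_pmf_bounded:
  fixes g :: "'b \<Rightarrow> real"
  assumes "\<And>y. \<bar>g y\<bar> \<le> B"
  shows "measure_pmf.expectation (bind_pmf p q) g =
         measure_pmf.expectation p (\<lambda>x. measure_pmf.expectation (q x) g)"
  unfolding measure_pmf_bind
  by (rule integral_bind[where K="count_space UNIV" and B=B and B'=1])
     (use assms measurable_measure_pmf[of q] in \<open>auto simp: measure_pmf.emeasure_space_1\<close>)

lemma expectation_Pi_pmf_component:
  fixes g :: "'a \<Rightarrow> real"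
  assumes "finite I" "i \<in> I"
  shows "measure_pmf.expectation (Pi_pmf I dflt p) (\<lambda>z. g (z i)) = measure_pmf.expectation (p i) g"
proof -
  have "map_pmf (\<lambda>z. z i) (Pi_pmf I dflt p) = p i"
    using Pi_pmf_component[OF assms(1), of i dflt p] assms(2) by simp
  then show ?thesis by (metis integral_map_pmf)
qed

text \<open>Independence of the coordinates of \<open>Pi_pmf\<close>: the expectation of a product over a subfamily
  of coordinates factorises (stated for nonnegative bounded factors, as in the library lemma).\<close>

lemma expectation_Pi_pmf_prod_subset:
  fixes g :: "'i \<Rightarrow> 'a \<Rightarrow> real"
  assumes I: "finite I" and JI: "J \<subseteq> I"
    and nonneg: "\<And>x y. x \<in> J \<Longrightarrow> 0 \<le> g x y" and bound: "\<And>x y. x \<in> J \<Longrightarrow> g x y \<le> B"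
  shows "measure_pmf.expectation (Pi_pmf I dflt p) (\<lambda>z. \<Prod>x\<in>J. g x (z x)) =
         (\<Prod>x\<in>J. measure_pmf.expectation (p x) (g x))"
proof -
  define G where "G x = (if x \<in> J then g x else (\<lambda>_. 1))" for x
  have restrict: "(\<Prod>x\<in>I. h x (G x)) = (\<Prod>x\<in>J. h x (g x))" if "\<And>x. h x (\<lambda>_. 1) = 1" for h :: "'i \<Rightarrow> ('a \<Rightarrow> real) \<Rightarrow> real"
  proof -
    have "(\<Prod>x\<in>I. h x (G x)) = (\<Prod>x\<in>I. if x \<in> J then h x (g x) else 1)"
      using that by (intro prod.cong) (auto simp: G_def)
    also have "\<dots> = (\<Prod>x\<in>J. h x (g x))"
      using I JI by (simp add: prod.inter_restrict[symmetric] Int_absorb1)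
    finally show ?thesis .
  qed
  have "measure_pmf.expectation (Pi_pmf I dflt p) (\<lambda>z. \<Prod>x\<in>I. G x (z x)) =
        (\<Prod>x\<in>I. measure_pmf.expectation (p x) (G x))"
    by (rule expectation_prod_Pi_pmf[OF I])
       (auto simp: G_def nonneg intro!: integrable_pmf_bounded[where B="max B 1"]
             intro: order.trans[OF _ le_max_iff_disj[THEN iffD2]] abs_of_nonneg
             dest: bound nonneg)
  with restrict[of "\<lambda>x u. u (z x)" for z] restrict[of "\<lambda>x u. measure_pmf.expectation (p x) u"]
  show ?thesis by simp
qed

lemma expectation_Pi_pmf_cross_zero:
  fixes f :: "'i \<Rightarrow> 'a \<Rightarrow> real"
  assumes I: "finite I" and ij: "i \<in> I" "j \<in> I" "i \<noteq> j"
    and bound: "\<And>l x. l \<in> I \<Longrightarrow> \<bar>f l x\<bar> \<le> B"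
    and mean0: "\<And>l. l \<in> I \<Longrightarrow> measure_pmf.expectation (p l) (f l) = 0"
  shows "measure_pmf.expectation (Pi_pmf I dflt p) (\<lambda>z. f i (z i) * f j (z j)) = 0"
proof -
  let ?P = "Pi_pmf I dflt p" and ?E = "measure_pmf.expectation"
  define g where "g l x = f l x + B" for l x
  have int: "integrable (measure_pmf q) (\<lambda>z. f l (z l))" if "l \<in> I" for l and q :: "('i \<Rightarrow> 'a) pmf"
    by (rule integrable_pmf_bounded) (use bound that in auto)
  have int2: "integrable (measure_pmf ?P) (\<lambda>z. f i (z i) * f j (z j))"
    by (rule integrable_pmf_bounded[where B="B * B"])
       (use bound[OF ij(1)] bound[OF ij(2)] in \<open>auto simp: abs_mult intro: mult_mono'\<close>)
  have Eg: "?E (p l) (g l) = B" if "l \<in> I" for l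
    unfolding g_def using mean0[OF that] integrable_pmf_bounded[of "f l" B] bound[OF that] by simp
  have Ef: "?E ?P (\<lambda>z. f l (z l)) = 0" if "l \<in> I" for l
    using expectation_Pi_pmf_component[OF I that, where g="f l" and dflt=dflt and p=p] mean0[OF that] by simp
  have "?E ?P (\<lambda>z. \<Prod>l\<in>{i,j}. g l (z l)) = (\<Prod>l\<in>{i,j}. ?E (p l) (g l))"
  proof (rule expectation_Pi_pmf_prod_subset[OF I, where B="2 * B"])
    fix l y assume "l \<in> {i, j}"
    then have "\<bar>f l y\<bar> \<le> B" using ij bound by auto
    then show "0 \<le> g l y" "g l y \<le> 2 * B" by (auto simp: g_def)
  qed (use ij in auto)
  then have "?E ?P (\<lambda>z. f i (z i) * f j (z j) + B * f i (z i) + B * f j (z j) + B * B) = B * B"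
    using ij Eg by (simp add: g_def algebra_simps)
  then show ?thesis
    using int2 int[OF ij(1)] int[OF ij(2)] Ef[OF ij(1)] Ef[OF ij(2)] by simp
qed

text \<open>Second moment of a sum of independent centred bounded coordinates: the cross terms vanish.\<close>

lemma expectation_Pi_pmf_square_sum:
  fixes f :: "'i \<Rightarrow> 'a \<Rightarrow> real"
  assumes I: "finite I" and bound: "\<And>i x. i \<in> I \<Longrightarrow> \<bar>f i x\<bar> \<le> B"
    and mean0: "\<And>i. i \<in> I \<Longrightarrow> measure_pmf.expectation (p i) (f i) = 0"
  shows "measure_pmf.expectation (Pi_pmf I dflt p) (\<lambda>z. (\<Sum>i\<in>I. f i (z i))\<^sup>2) =
         (\<Sum>i\<in>I. measure_pmf.expectation (p i) (\<lambda>x. (f i x)\<^sup>2))"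
proof -
  let ?P = "Pi_pmf I dflt p" and ?E = "measure_pmf.expectation"
  have int: "integrable (measure_pmf ?P) (\<lambda>z. f i (z i) * f j (z j))" if "i \<in> I" "j \<in> I" for i j
    by (rule integrable_pmf_bounded[where B="B * B"])
       (use bound[OF that(1)] bound[OF that(2)] in \<open>auto simp: abs_mult intro: mult_mono'\<close>)
  have cross: "?E ?P (\<lambda>z. f i (z i) * f j (z j)) = (if i = j then ?E (p i) (\<lambda>x. (f i x)\<^sup>2) else 0)"
    if "i \<in> I" "j \<in> I" for i j
    using expectation_Pi_pmf_component[OF I that(1), where g="\<lambda>x. (f i x)\<^sup>2" and dflt=dflt and p=p]
          expectation_Pi_pmf_cross_zero[OF I that _ bound mean0]
    by (auto simp: power2_eq_square)
  have "?E ?P (\<lambda>z. (\<Sum>i\<in>I. f i (z i))\<^sup>2) = ?E ?P (\<lambda>z. \<Sum>i\<in>I. \<Sum>j\<in>I. f i (z i) * f j (z j))"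
    by (simp add: power2_eq_square sum_product)
  also have "\<dots> = (\<Sum>i\<in>I. \<Sum>j\<in>I. ?E ?P (\<lambda>z. f i (z i) * f j (z j)))"
    using int by (simp add: Bochner_Integration.integral_sum integrable_sum)
  also have "\<dots> = (\<Sum>i\<in>I. ?E (p i) (\<lambda>x. (f i x)\<^sup>2))"
    using I by (simp add: cross sum.delta cong: sum.cong)
  finally show ?thesis .
qed

lemma Pi_pmf_insert_as_update:
  assumes "finite I" "c \<notin> I"
  shows "Pi_pmf (insert c I) dflt p = bind_pmf (Pi_pmf I dflt p) (\<lambda>f. map_pmf (\<lambda>y. f(c:=y)) (p c))"
  using assms by (simp add: Pi_pmf_insert' map_pmf_def) (subst bind_commute_pmf; simp)

lemma prob_Pi_pmf_update_le:
  assumes I: "finite I" "c \<notin> I" and \<rho>: "0 \<le> \<rho>"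
    and level: "\<And>v. measure_pmf.prob (p c) {y. \<phi> y = v} \<le> \<rho>"
    and same: "\<And>f y y'. f(c:=y) \<in> E \<Longrightarrow> f(c:=y') \<in> E \<Longrightarrow> \<phi> y = \<phi> y'"
  shows "measure_pmf.prob (Pi_pmf (insert c I) dflt p) E
           \<le> \<rho> * measure_pmf.prob (Pi_pmf I dflt p) {f. \<exists>y. f(c:=y) \<in> E}"
proof -
  define E' where "E' = {f. \<exists>y. f(c:=y) \<in> E}"
  let ?slice = "\<lambda>f. map_pmf (\<lambda>y. f(c:=y)) (p c)"
  have slice: "measure_pmf.expectation (?slice f) (indicator E) \<le> \<rho> * indicator E' f" for f
  proof -
    have "measure_pmf.expectation (?slice f) (indicator E) = measure_pmf.prob (p c) {y. f(c:=y) \<in> E}"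
      by (simp add: vimage_def)
    also have "\<dots> \<le> \<rho> * indicator E' f"
    proof (cases "f \<in> E'")
      case True
      then obtain y0 where y0: "f(c:=y0) \<in> E" by (auto simp: E'_def)
      have "{y. f(c:=y) \<in> E} \<subseteq> {y. \<phi> y = \<phi> y0}" using same[OF _ y0] by blast
      then have "measure_pmf.prob (p c) {y. f(c:=y) \<in> E} \<le> measure_pmf.prob (p c) {y. \<phi> y = \<phi> y0}"
        by (rule measure_pmf.finite_measure_mono) simp
      also have "\<dots> \<le> \<rho>" by (rule level)
      finally show ?thesis using True by simp
    next
      case False
      then have "{y. f(c:=y) \<in> E} = {}" by (auto simp: E'_def)
      then show ?thesis using False by simp
    qed
    finally show ?thesis .
  qed
  have "measure_pmf.prob (Pi_pmf (insert c I) dflt p) E =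
     measure_pmf.expectation (Pi_pmf (insert c I) dflt p) (indicator E)"
    by (rule prob_eq_expectation_indicator)
  also have "\<dots> = measure_pmf.expectation (Pi_pmf I dflt p) (\<lambda>f. measure_pmf.expectation (?slice f) (indicator E))"
    unfolding Pi_pmf_insert_as_update[OF I]
    by (rule expectation_bind_pmf_bounded[where B=1]) (simp add: indicator_def)
  also have "\<dots> \<le> measure_pmf.expectation (Pi_pmf I dflt p) (\<lambda>f. \<rho> * indicator E' f)"
  proof (rule integral_mono[OF _ _ slice])
    show "integrable (measure_pmf (Pi_pmf I dflt p)) (\<lambda>f. measure_pmf.expectation (?slice f) (indicator E :: _ \<Rightarrow> real))"
      by (rule integrable_pmf_bounded[where B=1])
         (metis prob_eq_expectation_indicator abs_of_nonneg measure_nonneg measure_pmf.prob_le_1)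
    show "integrable (measure_pmf (Pi_pmf I dflt p)) (\<lambda>f. \<rho> * indicator E' f)"
      by (rule integrable_pmf_bounded[where B="\<bar>\<rho>\<bar>"]) (auto simp: indicator_def)
  qed
  also have "\<dots> = \<rho> * measure_pmf.prob (Pi_pmf I dflt p) E'" by simp
  finally show ?thesis by (simp only: E'_def)
qed

lemma prob_Pi_pmf_le_pow_card:
  assumes "finite J"
  shows "finite I \<Longrightarrow> J \<subseteq> I \<Longrightarrow> 0 \<le> \<rho> \<Longrightarrow>
    (\<And>c v. c \<in> J \<Longrightarrow> measure_pmf.prob (p c) {y. \<phi> c y = v} \<le> \<rho>) \<Longrightarrow>
    (\<And>z z'. z \<in> E \<Longrightarrow> z' \<in> E \<Longrightarrow> \<forall>c\<in>I-J. z c = z' c \<Longrightarrow> \<forall>c\<in>J. \<phi> c (z c) = \<phi> c (z' c)) \<Longrightarrow>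
    measure_pmf.prob (Pi_pmf I dflt p) E \<le> \<rho> ^ card J"
  using assms
proof (induction J arbitrary: I E rule: finite_induct)
  case empty
  then show ?case by simp
next
  case (insert c J)
  define I' where "I' = I - {c}"
  define E' where "E' = {f. \<exists>y. f(c:=y) \<in> E}"
  have I: "I = insert c I'" "finite I'" "c \<notin> I'" using insert by (auto simp: I'_def)
  have "measure_pmf.prob (Pi_pmf (insert c I') dflt p) E \<le> \<rho> * measure_pmf.prob (Pi_pmf I' dflt p) E'"
    unfolding E'_def
  proof (rule prob_Pi_pmf_update_le[OF I(2,3) insert.prems(3)])
    show "measure_pmf.prob (p c) {y. \<phi> c y = v} \<le> \<rho>" for v by (rule insert.prems(4)) simp
    show "\<phi> c y = \<phi> c y'" if "f(c:=y) \<in> E" "f(c:=y') \<in> E" for f y y'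
      using insert.prems(5)[OF that] by simp
  qed
  also have "measure_pmf.prob (Pi_pmf I' dflt p) E' \<le> \<rho> ^ card J"
  proof (rule insert.IH)
    show "finite I'" "J \<subseteq> I'" "0 \<le> \<rho>" using I insert by (auto simp: I'_def)
    show "measure_pmf.prob (p c') {y. \<phi> c' y = v} \<le> \<rho>" if "c' \<in> J" for c' v
      using insert.prems(4) that by simp
    show "\<forall>c'\<in>J. \<phi> c' (z c') = \<phi> c' (z' c')" if zz: "z \<in> E'" "z' \<in> E'" "\<forall>c'\<in>I' - J. z c' = z' c'" for z z'
    proof -
      obtain y y' where yy: "z(c:=y) \<in> E" "z'(c:=y') \<in> E" using zz(1,2) by (auto simp: E'_def)
      have "\<forall>c'\<in>I - insert c J. (z(c:=y)) c' = (z'(c:=y')) c'" using zz(3) by (auto simp: I'_def)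
      then have "\<forall>c'\<in>insert c J. \<phi> c' ((z(c:=y)) c') = \<phi> c' ((z'(c:=y')) c')"
        using insert.prems(5)[OF yy] by blast
      then show ?thesis using insert.hyps(2) by (metis fun_upd_other insertCI)
    qed
  qed
  finally show ?case using I(1) insert.hyps insert.prems(3) by (simp add: mult_left_mono)
qed

lemma geometric_signed_sum_ge_last:
  fixes v \<epsilon> :: "nat \<Rightarrow> real"
  shows "(\<And>s. Suc s < L \<Longrightarrow> 2 * \<bar>v (Suc s)\<bar> \<le> \<bar>v s\<bar>) \<Longrightarrow> (\<And>s. s < L \<Longrightarrow> \<epsilon> s \<in> {-1,0,1}) \<Longrightarrow>
    (\<exists>s<L. \<epsilon> s \<noteq> 0) \<Longrightarrow> \<bar>v (L-1)\<bar> \<le> \<bar>\<Sum>s<L. v s * \<epsilon> s\<bar>"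
proof (induction L)
  case 0
  then show ?case by simp
next
  case (Suc L)
  have eL: "\<epsilon> L \<in> {-1,0,1}" using Suc.prems(2) by simp
  show ?case
  proof (cases "\<exists>s<L. \<epsilon> s \<noteq> 0")
    case True
    then have "L > 0" by auto
    have IH: "\<bar>v (L-1)\<bar> \<le> \<bar>\<Sum>s<L. v s * \<epsilon> s\<bar>" using Suc.IH Suc.prems True by auto
    have halve: "2 * \<bar>v L\<bar> \<le> \<bar>v (L-1)\<bar>" using Suc.prems(1)[of "L-1"] \<open>L > 0\<close> by simp
    have "\<bar>v L * \<epsilon> L\<bar> \<le> \<bar>v L\<bar>" using eL by (auto simp: abs_mult)
    then show ?thesis using IH halve by (simp add: sum.lessThan_Suc) linarith
  next
    case False
    then have "(\<Sum>s<L. v s * \<epsilon> s) = 0" by simp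
    moreover have "\<epsilon> L \<noteq> 0" using False Suc.prems(3) less_Suc_eq by auto
    ultimately show ?thesis using eL by auto
  qed
qed

lemma prob_Pi_pmf_small_ball:
  fixes \<Phi> :: "('i \<Rightarrow> 'a) \<Rightarrow> real" and v :: "nat \<Rightarrow> real" and c :: "nat \<Rightarrow> 'i"
  assumes I: "finite I" and cI: "\<And>s. s < L \<Longrightarrow> c s \<in> I" and c_inj: "inj_on c {..<L}"
    and halving: "\<And>s. Suc s < L \<Longrightarrow> 2 * \<bar>v (Suc s)\<bar> \<le> \<bar>v s\<bar>" and last: "2 * \<delta> \<le> \<bar>v (L - 1)\<bar>"
    and \<rho>: "0 \<le> \<rho>" and level: "\<And>s b. s < L \<Longrightarrow> measure_pmf.prob (p (c s)) {x. \<phi> (c s) x = b} \<le> \<rho>"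
    and diff: "\<And>z z'. \<forall>i\<in>I - c ` {..<L}. z i = z' i \<Longrightarrow>
       \<Phi> z - \<Phi> z' = (\<Sum>s<L. v s * (of_bool (\<phi> (c s) (z (c s))) - of_bool (\<phi> (c s) (z' (c s)))))"
  shows "measure_pmf.prob (Pi_pmf I dflt p) {z. \<bar>\<Phi> z\<bar> < \<delta>} \<le> \<rho> ^ L"
proof -
  have "measure_pmf.prob (Pi_pmf I dflt p) {z. \<bar>\<Phi> z\<bar> < \<delta>} \<le> \<rho> ^ card (c ` {..<L})"
  proof (rule prob_Pi_pmf_le_pow_card[OF _ I _ \<rho>])
    show "finite (c ` {..<L})" "c ` {..<L} \<subseteq> I" using cI by auto
    show "measure_pmf.prob (p i) {x. \<phi> i x = b} \<le> \<rho>" if "i \<in> c ` {..<L}" for i b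
      using that level by auto
    show "\<forall>i\<in>c ` {..<L}. \<phi> i (z i) = \<phi> i (z' i)"
      if zz: "z \<in> {z. \<bar>\<Phi> z\<bar> < \<delta>}" "z' \<in> {z. \<bar>\<Phi> z\<bar> < \<delta>}" and agree: "\<forall>i\<in>I - c ` {..<L}. z i = z' i"
      for z z'
    proof (rule ccontr)
      assume "\<not> (\<forall>i\<in>c ` {..<L}. \<phi> i (z i) = \<phi> i (z' i))"
      then obtain s where s: "s < L" "\<phi> (c s) (z (c s)) \<noteq> \<phi> (c s) (z' (c s))" by auto
      define \<epsilon> where "\<epsilon> s = (of_bool (\<phi> (c s) (z (c s))) - of_bool (\<phi> (c s) (z' (c s))) :: real)" for s
      have "\<bar>v (L - 1)\<bar> \<le> \<bar>\<Sum>s<L. v s * \<epsilon> s\<bar>"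
        by (rule geometric_signed_sum_ge_last[where v=v, OF halving])
           (use s in \<open>auto simp: \<epsilon>_def\<close>)
      also have "\<dots> = \<bar>\<Phi> z - \<Phi> z'\<bar>" using diff[OF agree] by (simp add: \<epsilon>_def)
      also have "\<dots> < 2 * \<delta>" using zz by simp
      finally show False using last by simp
    qed
  qed
  then show ?thesis using card_image[OF c_inj] by simp
qed

text \<open>Grouping coordinates into classes of size at most \<open>d\<close> inflates squared norms by at most \<open>d\<close>
  (Cauchy--Schwarz inside each class).\<close>

lemma sum_group_square_le:
  fixes a :: "'a \<Rightarrow> real"
  assumes S: "finite S" and T: "finite T" and gST: "g ` S \<subseteq> T"
    and small: "\<And>l. l \<in> T \<Longrightarrow> card {j\<in>S. g j = l} \<le> d"
  shows "(\<Sum>l\<in>T. (\<Sum>j\<in>{j\<in>S. g j = l}. a j)\<^sup>2) \<le> real d * (\<Sum>j\<in>S. (a j)\<^sup>2)"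
proof -
  have "(\<Sum>j\<in>{j\<in>S. g j = l}. a j)\<^sup>2 \<le> real d * (\<Sum>j\<in>{j\<in>S. g j = l}. (a j)\<^sup>2)" if l: "l \<in> T" for l
  proof -
    have "(\<Sum>j\<in>{j\<in>S. g j = l}. a j * 1)\<^sup>2 \<le> (\<Sum>j\<in>{j\<in>S. g j = l}. (a j)\<^sup>2) * (\<Sum>j\<in>{j\<in>S. g j = l}. 1\<^sup>2)"
      by (rule Cauchy_Schwarz_ineq_sum)
    also have "\<dots> \<le> (\<Sum>j\<in>{j\<in>S. g j = l}. (a j)\<^sup>2) * real d"
      using small[OF l] by (intro mult_left_mono) (auto intro: sum_nonneg)
    finally show ?thesis by (simp add: mult.commute)
  qed
  then have "(\<Sum>l\<in>T. (\<Sum>j\<in>{j\<in>S. g j = l}. a j)\<^sup>2) \<le> (\<Sum>l\<in>T. real d * (\<Sum>j\<in>{j\<in>S. g j = l}. (a j)\<^sup>2))"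
    by (rule sum_mono)
  also have "\<dots> = real d * (\<Sum>j\<in>S. (a j)\<^sup>2)"
    by (simp add: sum_distrib_left[symmetric] sum.group[OF S T gST])
  finally show ?thesis .
qed

text \<open>Shifting the argument of the threshold function by \<open>t\<close> changes its value only if the argument
  was within \<open>\<delta>\<close> of the threshold or \<open>\<bar>t\<bar> \<ge> \<delta>\<close>; the second case is charged to \<open>t\<^sup>2/\<delta>\<^sup>2 \<ge> 1\<close>.\<close>

lemma sgn01_shift_le:
  fixes A t \<delta> :: real
  assumes "0 < \<delta>"
  shows "\<bar>sgn01 A - sgn01 (A + t)\<bar> \<le> t\<^sup>2 / \<delta>\<^sup>2 + of_bool (\<bar>A\<bar> < \<delta>)"
proof (cases "\<bar>A\<bar> < \<delta> \<or> sgn01 A = sgn01 (A + t)")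
  case True
  then show ?thesis by (auto simp: sgn01_def)
next
  case False
  then have "\<delta> \<le> \<bar>t\<bar>" by (auto simp: sgn01_def split: if_splits)
  then have "\<delta>\<^sup>2 \<le> t\<^sup>2" using assms by (metis abs_le_square_iff abs_of_pos)
  then have "1 \<le> t\<^sup>2 / \<delta>\<^sup>2" using assms by simp
  then show ?thesis by (auto simp: sgn01_def)
qed

text \<open>The distribution \<open>edge_dist\<close> is sampled in two independent stages: the columns \<open>X l\<close> of the hidden
  assignment, then the noise field \<open>Z\<close>, where \<open>Z (i, j) = None\<close> means that the label \<open>j\<close> of \<open>v\<^sub>i\<close> copies
  \<open>X (\<pi> i j) i\<close> and \<open>Z (i, j) = Some c\<close> means it is replaced by the fresh bit \<open>c\<close>.\<close>

definition column_pmf :: "(bool \<Rightarrow> (nat \<Rightarrow> bool) pmf) \<Rightarrow> nat \<Rightarrow> bool \<Rightarrow> (nat \<Rightarrow> nat \<Rightarrow> bool) pmf" where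
  "column_pmf D N b = Pi_pmf {..<N} (\<lambda>_. False) (\<lambda>_. D b)"

definition noise_field_pmf :: "nat \<Rightarrow> nat \<Rightarrow> (nat \<times> nat \<Rightarrow> bool option) pmf" where
  "noise_field_pmf k M = Pi_pmf ({..<k} \<times> {..<M}) None (\<lambda>_. noise_pmf k)"

definition noisy_copy :: "bool \<Rightarrow> bool option \<Rightarrow> bool" where
  "noisy_copy x z = (case z of None \<Rightarrow> x | Some c \<Rightarrow> c)"

definition noisy_label ::
    "(nat \<Rightarrow> nat \<Rightarrow> nat) \<Rightarrow> (nat \<Rightarrow> nat \<Rightarrow> bool) \<Rightarrow> (nat \<times> nat \<Rightarrow> bool option) \<Rightarrow> nat \<Rightarrow> nat \<Rightarrow> bool" where
  "noisy_label \<pi> X Z i j = noisy_copy (X (\<pi> i j) i) (Z (i, j))"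

definition edge_sample :: "nat \<Rightarrow> nat \<Rightarrow> (nat \<Rightarrow> nat) \<Rightarrow> (nat \<Rightarrow> nat \<Rightarrow> nat) \<Rightarrow>
    (nat \<Rightarrow> nat \<Rightarrow> bool) \<Rightarrow> (nat \<times> nat \<Rightarrow> bool option) \<Rightarrow> nat \<Rightarrow> nat \<Rightarrow> bool" where
  "edge_sample k M vs \<pi> X Z = (\<lambda>v j.
     if v \<in> vs ` {..<k} \<and> j < M then noisy_label \<pi> X Z (inv_into {..<k} vs v) j else False)"

lemma edge_dist_two_stage:
  "edge_dist k N M vs \<pi> D b =
     bind_pmf (column_pmf D N b) (\<lambda>X. map_pmf (edge_sample k M vs \<pi> X) (noise_field_pmf k M))"
  unfolding edge_dist_def column_pmf_def noise_field_pmf_def edge_sample_def noisy_label_def noisy_copy_def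
  by (simp add: Let_def)

lemma expectation_edge_dist:
  fixes f :: "(nat \<Rightarrow> nat \<Rightarrow> bool) \<Rightarrow> real"
  assumes "\<And>y. \<bar>f y\<bar> \<le> B"
  shows "measure_pmf.expectation (edge_dist k N M vs \<pi> D b) f =
    measure_pmf.expectation (column_pmf D N b)
      (\<lambda>X. measure_pmf.expectation (noise_field_pmf k M) (\<lambda>Z. f (edge_sample k M vs \<pi> X Z)))"
  unfolding edge_dist_two_stage by (subst expectation_bind_pmf_bounded[OF assms]) simp

lemma ip_edge_sample:
  assumes "inj_on vs {..<k}" "i < k"
  shows "ip M u (edge_sample k M vs \<pi> X Z (vs i)) = (\<Sum>j<M. u j * of_bool (noisy_label \<pi> X Z i j))"
  unfolding ip_def edge_sample_def using assms by (intro sum.cong refl) (simp add: inv_into_f_f)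

lemma abs_ip_le: "\<bar>ip M u y\<bar> \<le> (\<Sum>j<M. \<bar>u j\<bar>)"
  unfolding ip_def by (rule order.trans[OF sum_abs]) (intro sum_mono, simp add: abs_mult)

definition noisy_mean :: "nat \<Rightarrow> bool \<Rightarrow> real" where
  "noisy_mean k x = (1 - 1 / (real k)\<^sup>2) * of_bool x + 1 / (real k)\<^sup>2 / 2"

lemma expectation_noise_pmf:
  fixes \<phi> :: "bool option \<Rightarrow> real"
  assumes "k > 0"
  shows "measure_pmf.expectation (noise_pmf k) \<phi> =
     (1 - 1 / (real k)\<^sup>2) * \<phi> None + 1 / (real k)\<^sup>2 / 2 * (\<phi> (Some True) + \<phi> (Some False))"
proof -
  have q: "0 \<le> 1 / (real k)\<^sup>2" "1 / (real k)\<^sup>2 \<le> 1" using assms by (auto simp: field_simps)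
  have bound: "\<bar>\<phi> y\<bar> \<le> \<bar>\<phi> None\<bar> + \<bar>\<phi> (Some True)\<bar> + \<bar>\<phi> (Some False)\<bar>" for y
    by (cases y; cases "the y") auto
  show ?thesis unfolding noise_pmf_def
    by (subst expectation_bind_pmf_bounded[OF bound]) (use q in \<open>simp add: algebra_simps add_divide_distrib\<close>)
qed

lemma expectation_noisy_copy:
  assumes "k > 0"
  shows "measure_pmf.expectation (noise_pmf k) (\<lambda>z. of_bool (noisy_copy x z)) = noisy_mean k x"
  by (simp add: expectation_noise_pmf[OF assms] noisy_copy_def noisy_mean_def)

lemma prob_noisy_copy_le:
  assumes "k > 0"
  shows "measure_pmf.prob (noise_pmf k) {z. noisy_copy x z = v} \<le> 1 - 1 / (real k)\<^sup>2 / 2"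
proof -
  have q: "0 \<le> 1 / (real k)\<^sup>2" "1 / (real k)\<^sup>2 \<le> 1" using assms by (auto simp: field_simps)
  have "measure_pmf.prob (noise_pmf k) {z. noisy_copy x z = v} =
        measure_pmf.expectation (noise_pmf k) (\<lambda>z. of_bool (noisy_copy x z = v))"
    by (simp add: expectation_of_bool)
  also have "\<dots> = (1 - 1 / (real k)\<^sup>2) * of_bool (x = v) + 1 / (real k)\<^sup>2 / 2"
    by (subst expectation_noise_pmf[OF assms]) (cases v; simp add: noisy_copy_def)
  also have "\<dots> \<le> 1 - 1 / (real k)\<^sup>2 / 2" using q by (cases "x = v") auto
  finally show ?thesis .
qed

lemma noisy_mean_bounds:
  assumes "k > 0" shows "0 \<le> noisy_mean k x \<and> noisy_mean k x \<le> 1"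
proof -
  have "0 \<le> 1 / (real k)\<^sup>2" "1 / (real k)\<^sup>2 \<le> 1" using assms by (auto simp: field_simps)
  then show ?thesis by (auto simp: noisy_mean_def)
qed

lemma expectation_noisy_mean_bounds:
  assumes k: "k > 0"
  shows "0 \<le> measure_pmf.expectation (D b) (\<lambda>x. noisy_mean k (x r)) \<and>
         measure_pmf.expectation (D b) (\<lambda>x. noisy_mean k (x r)) \<le> 1"
proof
  show "0 \<le> measure_pmf.expectation (D b) (\<lambda>x. noisy_mean k (x r))" using noisy_mean_bounds[OF k] by simp
  have "measure_pmf.expectation (D b) (\<lambda>x. noisy_mean k (x r)) \<le> measure_pmf.expectation (D b) (\<lambda>_. 1)"
    by (rule integral_mono') (use noisy_mean_bounds[OF k] in auto)
  then show "measure_pmf.expectation (D b) (\<lambda>x. noisy_mean k (x r)) \<le> 1" by simp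
qed

lemma expectation_noisy_mean:
  assumes "k > 0"
  shows "measure_pmf.expectation p (\<lambda>x. noisy_mean k (x r)) =
         (1 - 1 / (real k)\<^sup>2) * measure_pmf.expectation p (\<lambda>x. of_bool (x r)) + 1 / (real k)\<^sup>2 / 2"
proof -
  have "integrable (measure_pmf p) (\<lambda>x. of_bool (x r) :: real)" by (rule integrable_pmf_bounded[where B=1]) simp
  then show ?thesis by (simp add: noisy_mean_def)
qed

lemma expectation_noise_field_label:
  fixes g :: "bool \<Rightarrow> real"
  assumes "i < k" "j < M"
  shows "measure_pmf.expectation (noise_field_pmf k M) (\<lambda>Z. g (noisy_label \<pi> X Z i j)) =
         measure_pmf.expectation (noise_pmf k) (\<lambda>z. g (noisy_copy (X (\<pi> i j) i) z))"
  unfolding noise_field_pmf_def noisy_label_def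
  by (rule expectation_Pi_pmf_component[where g="\<lambda>z. g (noisy_copy (X (\<pi> i j) i) z)"]) (use assms in auto)

lemma expectation_column_pmf:
  fixes g :: "(nat \<Rightarrow> bool) \<Rightarrow> real"
  assumes "l < N"
  shows "measure_pmf.expectation (column_pmf D N b) (\<lambda>X. g (X l)) = measure_pmf.expectation (D b) g"
  unfolding column_pmf_def by (rule expectation_Pi_pmf_component) (use assms in auto)

lemma expectation_noise_field_ip:
  assumes k: "k > 0" and inj: "inj_on vs {..<k}" and r: "r < k"
  shows "measure_pmf.expectation (noise_field_pmf k M) (\<lambda>Z. ip M a (edge_sample k M vs \<pi> X Z (vs r))) =
         (\<Sum>j<M. a j * noisy_mean k (X (\<pi> r j) r))"
proof -
  have "measure_pmf.expectation (noise_field_pmf k M) (\<lambda>Z. ip M a (edge_sample k M vs \<pi> X Z (vs r))) =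
        (\<Sum>j<M. a j * measure_pmf.expectation (noise_field_pmf k M) (\<lambda>Z. of_bool (noisy_label \<pi> X Z r j)))"
    unfolding ip_edge_sample[OF inj r]
    by (subst Bochner_Integration.integral_sum) (auto intro!: integrable_pmf_bounded[where B=1])
  also have "\<dots> = (\<Sum>j<M. a j * noisy_mean k (X (\<pi> r j) r))"
    using r by (intro sum.cong refl) (simp add: expectation_noise_field_label expectation_noisy_copy[OF k])
  finally show ?thesis .
qed

lemma expectation_ip_edge_dist:
  assumes k: "k > 0" and inj: "inj_on vs {..<k}" and r: "r < k" and \<pi>: "\<forall>j<M. \<pi> r j < N"
  shows "measure_pmf.expectation (edge_dist k N M vs \<pi> D b) (\<lambda>y. ip M a (y (vs r))) =
         (\<Sum>j<M. a j) * measure_pmf.expectation (D b) (\<lambda>x. noisy_mean k (x r))"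
proof -
  have "measure_pmf.expectation (edge_dist k N M vs \<pi> D b) (\<lambda>y. ip M a (y (vs r))) =
        measure_pmf.expectation (column_pmf D N b) (\<lambda>X. \<Sum>j<M. a j * noisy_mean k (X (\<pi> r j) r))"
    by (simp add: expectation_edge_dist[OF abs_ip_le] expectation_noise_field_ip[OF k inj r])
  also have "\<dots> = (\<Sum>j<M. a j * measure_pmf.expectation (column_pmf D N b) (\<lambda>X. noisy_mean k (X (\<pi> r j) r)))"
    using noisy_mean_bounds[OF k]
    by (subst Bochner_Integration.integral_sum) (auto intro!: integrable_pmf_bounded[where B=1])
  also have "\<dots> = (\<Sum>j<M. a j) * measure_pmf.expectation (D b) (\<lambda>x. noisy_mean k (x r))"
    using \<pi> by (simp add: sum_distrib_right expectation_column_pmf[where g="\<lambda>x. noisy_mean k (x r)"])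
  finally show ?thesis .
qed

lemma sum_product_single_row:
  fixes G :: "nat \<Rightarrow> real" and k M r :: nat
  assumes "r < k"
  shows "(\<Sum>c\<in>{..<k} \<times> {..<M}. if fst c = r then G (snd c) else 0) = (\<Sum>j<M. G j)"
proof -
  have "(\<Sum>c\<in>{..<k} \<times> {..<M}. if fst c = r then G (snd c) else 0) = (\<Sum>i<k. \<Sum>j<M. if i = r then G j else 0)"
    by (subst sum.cartesian_product) (simp add: case_prod_beta)
  also have "\<dots> = (\<Sum>i<k. if i = r then (\<Sum>j<M. G j) else 0)" by (intro sum.cong refl) auto
  also have "\<dots> = (\<Sum>j<M. G j)" using assms by (subst sum.delta) auto
  finally show ?thesis .
qed

text \<open>Noise part of the variance: for fixed columns, the linear form is a sum of independent centred
  terms \<open>a\<^sub>j (y\<^sub>j - E y\<^sub>j)\<close>, so its variance is at most \<open>\<parallel>a\<parallel>\<^sup>2\<close>.\<close>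

lemma noise_variance_le:
  assumes k: "k > 0" and inj: "inj_on vs {..<k}" and r: "r < k"
  shows "measure_pmf.expectation (noise_field_pmf k M)
           (\<lambda>Z. (ip M a (edge_sample k M vs \<pi> X Z (vs r)) - (\<Sum>j<M. a j * noisy_mean k (X (\<pi> r j) r)))\<^sup>2)
         \<le> (\<Sum>j<M. (a j)\<^sup>2)"
proof -
  define \<epsilon> where "\<epsilon> j z = of_bool (noisy_copy (X (\<pi> r j) r) z) - noisy_mean k (X (\<pi> r j) r)" for j z
  define f where "f c z = (if fst c = r then a (snd c) * \<epsilon> (snd c) z else 0)" for c :: "nat \<times> nat" and z
  have \<epsilon>1: "\<bar>\<epsilon> j z\<bar> \<le> 1" for j z
    using noisy_mean_bounds[OF k, of "X (\<pi> r j) r"] by (auto simp: \<epsilon>_def)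
  have f_sq: "(f c z)\<^sup>2 \<le> (if fst c = r then (a (snd c))\<^sup>2 else 0)" for c z
    using \<epsilon>1[of "snd c" z] by (auto simp: f_def power_mult_distrib abs_square_le_1 intro: mult_left_le)
  have f_bound: "\<bar>f c z\<bar> \<le> (\<Sum>j<M. \<bar>a j\<bar>)" if c: "c \<in> {..<k} \<times> {..<M}" for c z
  proof -
    have "\<bar>f c z\<bar> \<le> \<bar>a (snd c)\<bar>" using \<epsilon>1[of "snd c" z] by (auto simp: f_def abs_mult intro: mult_left_le)
    also have "\<dots> \<le> (\<Sum>j<M. \<bar>a j\<bar>)" using c by (intro member_le_sum) auto
    finally show ?thesis by (cases "fst c = r") (auto simp: f_def intro: sum_nonneg)
  qed
  have \<epsilon>_mean: "measure_pmf.expectation (noise_pmf k) (\<epsilon> j) = 0" for j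
  proof -
    have "measure_pmf.expectation (noise_pmf k) (\<epsilon> j) =
          measure_pmf.expectation (noise_pmf k) (\<lambda>z. of_bool (noisy_copy (X (\<pi> r j) r) z)) - noisy_mean k (X (\<pi> r j) r)"
      unfolding \<epsilon>_def
      by (subst Bochner_Integration.integral_diff) (auto intro!: integrable_pmf_bounded[where B=1])
    then show ?thesis by (simp add: expectation_noisy_copy[OF k])
  qed
  have f_mean: "measure_pmf.expectation (noise_pmf k) (f c) = 0" for c
    using \<epsilon>_mean[of "snd c"] by (cases "fst c = r") (simp_all add: f_def[abs_def])
  have centred: "ip M a (edge_sample k M vs \<pi> X Z (vs r)) - (\<Sum>j<M. a j * noisy_mean k (X (\<pi> r j) r)) =
        (\<Sum>c\<in>{..<k} \<times> {..<M}. f c (Z c))" for Z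
  proof -
    have "(\<Sum>c\<in>{..<k} \<times> {..<M}. f c (Z c)) =
          (\<Sum>c\<in>{..<k} \<times> {..<M}. if fst c = r then a (snd c) * \<epsilon> (snd c) (Z (r, snd c)) else 0)"
      by (intro sum.cong refl) (auto simp: f_def)
    also have "\<dots> = (\<Sum>j<M. a j * \<epsilon> j (Z (r, j)))" by (rule sum_product_single_row[OF r])
    finally show ?thesis
      unfolding ip_edge_sample[OF inj r] \<epsilon>_def noisy_label_def
      by (simp add: right_diff_distrib sum_subtractf)
  qed
  have "measure_pmf.expectation (noise_field_pmf k M)
        (\<lambda>Z. (ip M a (edge_sample k M vs \<pi> X Z (vs r)) - (\<Sum>j<M. a j * noisy_mean k (X (\<pi> r j) r)))\<^sup>2)
      = (\<Sum>c\<in>{..<k} \<times> {..<M}. measure_pmf.expectation (noise_pmf k) (\<lambda>z. (f c z)\<^sup>2))"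
    unfolding noise_field_pmf_def centred by (simp add: expectation_Pi_pmf_square_sum[OF _ f_bound f_mean])
  also have "\<dots> \<le> (\<Sum>c\<in>{..<k} \<times> {..<M}. if fst c = r then (a (snd c))\<^sup>2 else 0)"
  proof (rule sum_mono)
    fix c
    have "measure_pmf.expectation (noise_pmf k) (\<lambda>z. (f c z)\<^sup>2) \<le>
          measure_pmf.expectation (noise_pmf k) (\<lambda>z. if fst c = r then (a (snd c))\<^sup>2 else 0)"
      by (rule integral_mono') (simp_all add: f_sq)
    then show "measure_pmf.expectation (noise_pmf k) (\<lambda>z. (f c z)\<^sup>2) \<le> (if fst c = r then (a (snd c))\<^sup>2 else 0)"
      by simp
  qed
  also have "\<dots> = (\<Sum>j<M. (a j)\<^sup>2)" by (rule sum_product_single_row[OF r])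
  finally show ?thesis .
qed

text \<open>Column part of the variance: grouping the labels \<open>j\<close> by the column \<open>\<pi> r j\<close> they copy turns the
  conditional mean into a sum of independent centred column terms with coefficients
  \<open>c\<^sub>l = \<Sum>\<^bsub>\<pi> r j = l\<^esub> a\<^sub>j\<close>; since at most \<open>d\<close> labels share a column, \<open>\<Sum>\<^sub>l c\<^sub>l\<^sup>2 \<le> d \<parallel>a\<parallel>\<^sup>2\<close>.\<close>

lemma column_variance_le:
  fixes D :: "bool \<Rightarrow> (nat \<Rightarrow> bool) pmf" and b :: bool and a :: "nat \<Rightarrow> real"
    and \<pi> :: "nat \<Rightarrow> nat \<Rightarrow> nat" and k r M N d :: nat
  assumes k: "k > 0" and \<pi>: "\<forall>j<M. \<pi> r j < N"
    and small: "\<forall>l<N. card {j\<in>{..<M}. \<pi> r j = l} \<le> d"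
  defines "m \<equiv> measure_pmf.expectation (D b) (\<lambda>x. noisy_mean k (x r))"
  shows "measure_pmf.expectation (column_pmf D N b)
           (\<lambda>X. ((\<Sum>j<M. a j * noisy_mean k (X (\<pi> r j) r)) - (\<Sum>j<M. a j) * m)\<^sup>2)
         \<le> real d * (\<Sum>j<M. (a j)\<^sup>2)"
proof -
  define cl where "cl l = (\<Sum>j\<in>{j\<in>{..<M}. \<pi> r j = l}. a j)" for l
  define f where "f l x = cl l * (noisy_mean k (x r) - m)" for l and x :: "nat \<Rightarrow> bool"
  have m01: "0 \<le> m" "m \<le> 1" using expectation_noisy_mean_bounds[OF k, of D b r] by (auto simp: m_def)
  have dev1: "\<bar>noisy_mean k (x r) - m\<bar> \<le> 1" for x :: "nat \<Rightarrow> bool"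
    using noisy_mean_bounds[OF k, of "x r"] m01 by linarith
  have cl_bound: "\<bar>cl l\<bar> \<le> (\<Sum>j<M. \<bar>a j\<bar>)" for l
    unfolding cl_def by (rule order.trans[OF sum_abs sum_mono2]) auto
  have f_sq: "(f l x)\<^sup>2 \<le> (cl l)\<^sup>2" for l x
    using dev1[of x] by (simp add: f_def power_mult_distrib abs_square_le_1 mult_left_le)
  have f_bound: "\<bar>f l x\<bar> \<le> (\<Sum>j<M. \<bar>a j\<bar>)" for l x
    using dev1[of x] cl_bound[of l] by (auto simp: f_def abs_mult intro: mult_le_one order.trans[OF mult_right_le_one_le])
  have f_mean: "measure_pmf.expectation (D b) (f l) = 0" for l
    unfolding f_def[abs_def] using noisy_mean_bounds[OF k]
    by (simp add: m_def Bochner_Integration.integral_diff integrable_pmf_bounded[where B=1])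
  have grouped: "(\<Sum>j<M. a j * noisy_mean k (X (\<pi> r j) r)) - (\<Sum>j<M. a j) * m = (\<Sum>l<N. f l (X l))" for X
  proof -
    have "(\<Sum>j<M. a j * noisy_mean k (X (\<pi> r j) r)) - (\<Sum>j<M. a j) * m =
          (\<Sum>j<M. a j * (noisy_mean k (X (\<pi> r j) r) - m))"
      by (simp add: right_diff_distrib sum_subtractf sum_distrib_right)
    also have "\<dots> = (\<Sum>l<N. \<Sum>j\<in>{j\<in>{..<M}. \<pi> r j = l}. a j * (noisy_mean k (X (\<pi> r j) r) - m))"
      by (rule sum.group[symmetric]) (use \<pi> in auto)
    also have "\<dots> = (\<Sum>l<N. f l (X l))"
      unfolding f_def cl_def sum_distrib_right by (intro sum.cong refl) auto
    finally show ?thesis .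
  qed
  have "measure_pmf.expectation (column_pmf D N b)
           (\<lambda>X. ((\<Sum>j<M. a j * noisy_mean k (X (\<pi> r j) r)) - (\<Sum>j<M. a j) * m)\<^sup>2)
      = (\<Sum>l<N. measure_pmf.expectation (D b) (\<lambda>x. (f l x)\<^sup>2))"
    unfolding grouped column_pmf_def by (rule expectation_Pi_pmf_square_sum[OF _ f_bound f_mean]) auto
  also have "\<dots> \<le> (\<Sum>l<N. (cl l)\<^sup>2)"
  proof (rule sum_mono)
    fix l
    have "measure_pmf.expectation (D b) (\<lambda>x. (f l x)\<^sup>2) \<le> measure_pmf.expectation (D b) (\<lambda>x. (cl l)\<^sup>2)"
      by (rule integral_mono') (simp_all add: f_sq)
    then show "measure_pmf.expectation (D b) (\<lambda>x. (f l x)\<^sup>2) \<le> (cl l)\<^sup>2" by simp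
  qed
  also have "\<dots> \<le> real d * (\<Sum>j<M. (a j)\<^sup>2)"
    unfolding cl_def by (rule sum_group_square_le) (use \<pi> small in auto)
  finally show ?thesis .
qed

lemma abs_weighted_sum_le:
  fixes a e :: "nat \<Rightarrow> real"
  assumes "\<And>j. 0 \<le> e j \<and> e j \<le> 1"
  shows "\<bar>\<Sum>j<M. a j * e j\<bar> \<le> (\<Sum>j<M. \<bar>a j\<bar>)"
proof -
  have "\<bar>a j * e j\<bar> \<le> \<bar>a j\<bar>" for j using assms[of j] by (simp add: abs_mult mult_left_le)
  then show ?thesis by (rule order.trans[OF sum_abs sum_mono])
qed

lemma square_diff_le:
  fixes u v B :: real
  assumes "\<bar>u\<bar> \<le> B" "\<bar>v\<bar> \<le> B"
  shows "(u - v)\<^sup>2 \<le> 4 * B\<^sup>2"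
proof -
  have "\<bar>u - v\<bar>\<^sup>2 \<le> (2 * B)\<^sup>2" by (rule power_mono) (use assms in linarith)+
  then show ?thesis by (simp add: power_mult_distrib)
qed

text \<open>Conditionally on the columns \<open>X\<close>, the deviation of \<open>\<langle>a, y\<^sub>v\<^sub>r\<rangle>\<close> from any centre \<open>\<mu>\<close> splits, by
  \<open>(s + t)\<^sup>2 \<le> 2 s\<^sup>2 + 2 t\<^sup>2\<close>, into the noise fluctuation and the distance of the conditional mean from \<open>\<mu>\<close>.\<close>

lemma conditional_second_moment_le:
  fixes X :: "nat \<Rightarrow> nat \<Rightarrow> bool" and \<pi> :: "nat \<Rightarrow> nat \<Rightarrow> nat" and a :: "nat \<Rightarrow> real"
  assumes k: "k > 0" and inj: "inj_on vs {..<k}" and r: "r < k" and \<mu>: "\<bar>\<mu>\<bar> \<le> (\<Sum>j<M. \<bar>a j\<bar>)"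
  defines "mX \<equiv> (\<Sum>j<M. a j * noisy_mean k (X (\<pi> r j) r))"
  shows "measure_pmf.expectation (noise_field_pmf k M) (\<lambda>Z. (ip M a (edge_sample k M vs \<pi> X Z (vs r)) - \<mu>)\<^sup>2)
         \<le> 2 * (\<Sum>j<M. (a j)\<^sup>2) + 2 * (mX - \<mu>)\<^sup>2"
proof -
  define Ba where "Ba = (\<Sum>j<M. \<bar>a j\<bar>)"
  define T where "T Z = ip M a (edge_sample k M vs \<pi> X Z (vs r))" for Z
  have T_bound: "\<bar>T Z\<bar> \<le> Ba" for Z unfolding T_def Ba_def by (rule abs_ip_le)
  have mX_bound: "\<bar>mX\<bar> \<le> Ba"
    unfolding mX_def Ba_def by (rule abs_weighted_sum_le) (use noisy_mean_bounds[OF k] in auto)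
  have dev_T\<mu>: "(T Z - \<mu>)\<^sup>2 \<le> 4 * Ba\<^sup>2" for Z using square_diff_le[OF T_bound \<mu>[folded Ba_def]] .
  have dev_TmX: "(T Z - mX)\<^sup>2 \<le> 4 * Ba\<^sup>2" for Z using square_diff_le[OF T_bound mX_bound] .
  have dev_mX\<mu>: "(mX - \<mu>)\<^sup>2 \<le> 4 * Ba\<^sup>2" using square_diff_le[OF mX_bound \<mu>[folded Ba_def]] .
  have "measure_pmf.expectation (noise_field_pmf k M) (\<lambda>Z. (T Z - \<mu>)\<^sup>2)
      \<le> measure_pmf.expectation (noise_field_pmf k M) (\<lambda>Z. 2 * (mX - \<mu>)\<^sup>2 + 2 * (T Z - mX)\<^sup>2)"
  proof (rule expectation_mono_bounded[where B="16 * Ba\<^sup>2"])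
    fix Z
    have nonneg: "0 \<le> Ba\<^sup>2" "0 \<le> (T Z - \<mu>)\<^sup>2" "0 \<le> 2 * (mX - \<mu>)\<^sup>2 + 2 * (T Z - mX)\<^sup>2"
      by simp_all
    show "\<bar>(T Z - \<mu>)\<^sup>2\<bar> \<le> 16 * Ba\<^sup>2"
      unfolding abs_of_nonneg[OF nonneg(2)] using dev_T\<mu>[of Z] nonneg(1) by linarith
    show "\<bar>2 * (mX - \<mu>)\<^sup>2 + 2 * (T Z - mX)\<^sup>2\<bar> \<le> 16 * Ba\<^sup>2"
      unfolding abs_of_nonneg[OF nonneg(3)] using dev_TmX[of Z] dev_mX\<mu> by linarith
    have "0 \<le> (T Z + \<mu> - 2 * mX)\<^sup>2" by simp
    then show "(T Z - \<mu>)\<^sup>2 \<le> 2 * (mX - \<mu>)\<^sup>2 + 2 * (T Z - mX)\<^sup>2"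
      by (simp add: power2_eq_square algebra_simps)
  qed
  also have "\<dots> = 2 * (mX - \<mu>)\<^sup>2 + 2 * measure_pmf.expectation (noise_field_pmf k M) (\<lambda>Z. (T Z - mX)\<^sup>2)"
    by (rule expectation_affine_bounded[where B="4 * Ba\<^sup>2"]) (simp add: dev_TmX)
  also have "\<dots> \<le> 2 * (\<Sum>j<M. (a j)\<^sup>2) + 2 * (mX - \<mu>)\<^sup>2"
    using noise_variance_le[OF k inj r, of M a \<pi> X] by (simp add: T_def mX_def)
  finally show ?thesis by (simp add: T_def)
qed

lemma edge_variance_le:
  fixes D :: "bool \<Rightarrow> (nat \<Rightarrow> bool) pmf" and b :: bool and a :: "nat \<Rightarrow> real"
    and \<pi> :: "nat \<Rightarrow> nat \<Rightarrow> nat" and k r M N d :: nat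
  assumes k: "k > 0" and inj: "inj_on vs {..<k}" and r: "r < k" and \<pi>: "\<forall>j<M. \<pi> r j < N"
    and small: "\<forall>l<N. card {j\<in>{..<M}. \<pi> r j = l} \<le> d"
  defines "\<mu> \<equiv> (\<Sum>j<M. a j) * measure_pmf.expectation (D b) (\<lambda>x. noisy_mean k (x r))"
  shows "measure_pmf.expectation (edge_dist k N M vs \<pi> D b) (\<lambda>y. (ip M a (y (vs r)) - \<mu>)\<^sup>2)
           \<le> (2 + 2 * real d) * (\<Sum>j<M. (a j)\<^sup>2)"
proof -
  define Sa where "Sa = (\<Sum>j<M. (a j)\<^sup>2)"
  define Ba where "Ba = (\<Sum>j<M. \<bar>a j\<bar>)"
  define mX where "mX X = (\<Sum>j<M. a j * noisy_mean k (X (\<pi> r j) r))" for X :: "nat \<Rightarrow> nat \<Rightarrow> bool"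
  have Sa0: "0 \<le> Sa" unfolding Sa_def by (auto intro: sum_nonneg)
  have \<mu>_bound: "\<bar>\<mu>\<bar> \<le> Ba"
    using abs_weighted_sum_le[where e="\<lambda>_. measure_pmf.expectation (D b) (\<lambda>x. noisy_mean k (x r))" and M=M and a=a]
          expectation_noisy_mean_bounds[OF k, of D b r]
    by (simp add: \<mu>_def Ba_def sum_distrib_right)
  have mX_bound: "\<bar>mX X\<bar> \<le> Ba" for X
    unfolding mX_def Ba_def by (rule abs_weighted_sum_le) (use noisy_mean_bounds[OF k] in auto)
  have dev_mX\<mu>: "(mX X - \<mu>)\<^sup>2 \<le> 4 * Ba\<^sup>2" for X by (rule square_diff_le[OF mX_bound \<mu>_bound])
  have "measure_pmf.expectation (edge_dist k N M vs \<pi> D b) (\<lambda>y. (ip M a (y (vs r)) - \<mu>)\<^sup>2) =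
        measure_pmf.expectation (column_pmf D N b)
          (\<lambda>X. measure_pmf.expectation (noise_field_pmf k M) (\<lambda>Z. (ip M a (edge_sample k M vs \<pi> X Z (vs r)) - \<mu>)\<^sup>2))"
    by (rule expectation_edge_dist[where B="4 * Ba\<^sup>2"])
       (use square_diff_le[OF abs_ip_le[of M a, folded Ba_def] \<mu>_bound] in simp)
  also have "\<dots> \<le> measure_pmf.expectation (column_pmf D N b) (\<lambda>X. 2 * Sa + 2 * (mX X - \<mu>)\<^sup>2)"
  proof (rule expectation_mono_bounded[where B="2 * Sa + 8 * Ba\<^sup>2"])
    fix X
    show "\<bar>measure_pmf.expectation (noise_field_pmf k M) (\<lambda>Z. (ip M a (edge_sample k M vs \<pi> X Z (vs r)) - \<mu>)\<^sup>2)\<bar>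
          \<le> 2 * Sa + 8 * Ba\<^sup>2"
    proof (rule abs_expectation_le_bound)
      fix Z
      show "\<bar>(ip M a (edge_sample k M vs \<pi> X Z (vs r)) - \<mu>)\<^sup>2\<bar> \<le> 2 * Sa + 8 * Ba\<^sup>2"
        using square_diff_le[OF abs_ip_le[of M a, folded Ba_def] \<mu>_bound, of "edge_sample k M vs \<pi> X Z (vs r)"]
              Sa0 zero_le_power2[of Ba] zero_le_power2[of "ip M a (edge_sample k M vs \<pi> X Z (vs r)) - \<mu>"]
        by linarith
    qed
    show "\<bar>2 * Sa + 2 * (mX X - \<mu>)\<^sup>2\<bar> \<le> 2 * Sa + 8 * Ba\<^sup>2"
      using dev_mX\<mu>[of X] Sa0 zero_le_power2[of Ba] zero_le_power2[of "mX X - \<mu>"] by linarith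
    show "measure_pmf.expectation (noise_field_pmf k M) (\<lambda>Z. (ip M a (edge_sample k M vs \<pi> X Z (vs r)) - \<mu>)\<^sup>2)
          \<le> 2 * Sa + 2 * (mX X - \<mu>)\<^sup>2"
      unfolding Sa_def mX_def by (rule conditional_second_moment_le[OF k inj r \<mu>_bound[unfolded Ba_def]])
  qed
  also have "\<dots> = 2 * Sa + 2 * measure_pmf.expectation (column_pmf D N b) (\<lambda>X. (mX X - \<mu>)\<^sup>2)"
    by (rule expectation_affine_bounded[where B="4 * Ba\<^sup>2"]) (simp add: dev_mX\<mu>)
  also have "\<dots> \<le> 2 * Sa + 2 * (real d * Sa)"
    using column_variance_le[where D=D and b=b and a=a and \<pi>=\<pi> and r=r, OF k \<pi> small]
    by (simp add: mX_def \<mu>_def Sa_def)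
  finally show ?thesis by (simp add: Sa_def algebra_simps)
qed

lemma prob_edge_dist_le:
  assumes "\<And>X. measure_pmf.prob (noise_field_pmf k M) {Z. P (edge_sample k M vs \<pi> X Z)} \<le> \<beta>"
  shows "measure_pmf.prob (edge_dist k N M vs \<pi> D b) {y. P y} \<le> \<beta>"
proof -
  have "measure_pmf.prob (edge_dist k N M vs \<pi> D b) {y. P y} =
        measure_pmf.expectation (column_pmf D N b)
          (\<lambda>X. measure_pmf.prob (noise_field_pmf k M) {Z. P (edge_sample k M vs \<pi> X Z)})"
    by (simp add: expectation_of_bool[symmetric] expectation_edge_dist[where B=1])
  also have "\<dots> \<le> measure_pmf.expectation (column_pmf D N b) (\<lambda>X. \<beta>)"
    by (rule integral_mono) (auto intro!: integrable_pmf_bounded[where B=1] assms simp: measure_pmf.prob_le_1)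
  finally show ?thesis by simp
qed

lemma linear_form_resample_diff:
  fixes wt :: "nat \<Rightarrow> nat \<Rightarrow> real"
  assumes inj: "inj_on vs {..<k}" and r: "r < k" and g: "\<And>s. s < L \<Longrightarrow> g s < M"
    and g_inj: "inj_on g {..<L}"
    and agree: "\<forall>c\<in>{..<k} \<times> {..<M} - (\<lambda>s. (r, g s)) ` {..<L}. Z c = Z' c"
  shows "(\<Sum>i<k. ip M (wt i) (edge_sample k M vs \<pi> X Z (vs i))) -
         (\<Sum>i<k. ip M (wt i) (edge_sample k M vs \<pi> X Z' (vs i))) =
         (\<Sum>s<L. wt r (g s) * (of_bool (noisy_label \<pi> X Z r (g s)) - of_bool (noisy_label \<pi> X Z' r (g s))))"
proof -
  define I where "I = {..<k} \<times> {..<M}"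
  define J where "J = (\<lambda>s. (r, g s)) ` {..<L}"
  define \<Delta> where "\<Delta> c = wt (fst c) (snd c) *
      (of_bool (noisy_label \<pi> X Z (fst c) (snd c)) - of_bool (noisy_label \<pi> X Z' (fst c) (snd c)))" for c
  have inj_rg: "inj_on (\<lambda>s. (r, g s)) {..<L}" using g_inj by (auto simp: inj_on_def)
  have "(\<Sum>i<k. ip M (wt i) (edge_sample k M vs \<pi> X Z (vs i))) -
        (\<Sum>i<k. ip M (wt i) (edge_sample k M vs \<pi> X Z' (vs i))) = (\<Sum>i<k. \<Sum>j<M. \<Delta> (i, j))"
    by (simp add: ip_edge_sample[OF inj] \<Delta>_def right_diff_distrib sum_subtractf)
  also have "\<dots> = (\<Sum>c\<in>I. \<Delta> c)" unfolding I_def by (simp add: sum.cartesian_product case_prod_beta)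
  also have "\<dots> = (\<Sum>c\<in>J. \<Delta> c)"
    by (rule sum.mono_neutral_right) (use agree r g in \<open>auto simp: I_def J_def \<Delta>_def noisy_label_def\<close>)
  also have "\<dots> = (\<Sum>s<L. \<Delta> (r, g s))" unfolding J_def by (simp add: sum.reindex[OF inj_rg])
  finally show ?thesis by (simp add: \<Delta>_def)
qed

lemma edge_small_ball:
  fixes wt :: "nat \<Rightarrow> nat \<Rightarrow> real"
  assumes k: "k > 0" and inj: "inj_on vs {..<k}" and r: "r < k"
    and g: "\<And>s. s < L \<Longrightarrow> g s < M" and g_inj: "inj_on g {..<L}"
    and halving: "\<And>s. Suc s < L \<Longrightarrow> 2 * \<bar>wt r (g (Suc s))\<bar> \<le> \<bar>wt r (g s)\<bar>"
    and last: "2 * \<delta> \<le> \<bar>wt r (g (L - 1))\<bar>"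
  shows "measure_pmf.prob (edge_dist k N M vs \<pi> D b) {y. \<bar>(\<Sum>i<k. ip M (wt i) (y (vs i))) - \<theta>\<bar> < \<delta>}
          \<le> (1 - 1 / (real k)\<^sup>2 / 2) ^ L"
proof (rule prob_edge_dist_le)
  fix X
  define \<phi> where "\<phi> c z = noisy_copy (X (\<pi> (fst c) (snd c)) (fst c)) z" for c :: "nat \<times> nat" and z
  have "1 \<le> (real k)\<^sup>2" using k by (simp add: one_le_power)
  then have \<rho>: "0 \<le> 1 - 1 / (real k)\<^sup>2 / 2" by (simp add: divide_le_eq)
  show "measure_pmf.prob (noise_field_pmf k M)
          {Z. \<bar>(\<Sum>i<k. ip M (wt i) (edge_sample k M vs \<pi> X Z (vs i))) - \<theta>\<bar> < \<delta>}
        \<le> (1 - 1 / (real k)\<^sup>2 / 2) ^ L"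
    unfolding noise_field_pmf_def
  proof (rule prob_Pi_pmf_small_ball[where c="\<lambda>s. (r, g s)" and v="\<lambda>s. wt r (g s)" and \<phi>=\<phi>,
                                     OF _ _ _ halving last \<rho>])
    show "inj_on (\<lambda>s. (r, g s)) {..<L}" using g_inj by (auto simp: inj_on_def)
    show "measure_pmf.prob (noise_pmf k) {x. \<phi> (r, g s) x = b'} \<le> 1 - 1 / (real k)\<^sup>2 / 2" for s b'
      unfolding \<phi>_def by (rule prob_noisy_copy_le[OF k])
    show "(\<Sum>i<k. ip M (wt i) (edge_sample k M vs \<pi> X Z (vs i))) - \<theta> -
          ((\<Sum>i<k. ip M (wt i) (edge_sample k M vs \<pi> X Z' (vs i))) - \<theta>) =
          (\<Sum>s<L. wt r (g s) * (of_bool (\<phi> (r, g s) (Z (r, g s))) - of_bool (\<phi> (r, g s) (Z' (r, g s)))))"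
      if "\<forall>c\<in>{..<k} \<times> {..<M} - (\<lambda>s. (r, g s)) ` {..<L}. Z c = Z' c" for Z Z'
      using linear_form_resample_diff[OF inj r g g_inj that, of wt]
      by (simp add: \<phi>_def noisy_label_def)
  qed (use r g in auto)
qed

lemma expectation_sgn01_shift_le:
  fixes A S :: "'a \<Rightarrow> real"
  assumes \<delta>: "0 < \<delta>" and S: "\<And>x. \<bar>S x\<bar> \<le> B"
  shows "\<bar>measure_pmf.expectation p (\<lambda>x. sgn01 (A x)) - measure_pmf.expectation p (\<lambda>x. sgn01 (A x + S x))\<bar>
         \<le> measure_pmf.expectation p (\<lambda>x. (S x)\<^sup>2) / \<delta>\<^sup>2 + measure_pmf.prob p {x. \<bar>A x\<bar> < \<delta>}"
proof -
  have sgn_bound: "\<bar>sgn01 z\<bar> \<le> 1" for z by (simp add: sgn01_def)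
  have int_sgn: "integrable (measure_pmf p) (\<lambda>x. sgn01 (F x))" for F :: "'a \<Rightarrow> real"
    by (rule integrable_pmf_bounded[OF sgn_bound])
  have int_S: "integrable (measure_pmf p) (\<lambda>x. (S x)\<^sup>2)"
  proof (rule integrable_pmf_bounded)
    show "\<bar>(S x)\<^sup>2\<bar> \<le> B\<^sup>2" for x using S[of x] by (simp add: abs_le_square_iff[symmetric] power_mono)
  qed
  have int_A: "integrable (measure_pmf p) (\<lambda>x. of_bool (\<bar>A x\<bar> < \<delta>) :: real)"
    by (rule integrable_pmf_bounded[where B=1]) simp
  have "\<bar>measure_pmf.expectation p (\<lambda>x. sgn01 (A x)) - measure_pmf.expectation p (\<lambda>x. sgn01 (A x + S x))\<bar>
        \<le> measure_pmf.expectation p (\<lambda>x. \<bar>sgn01 (A x) - sgn01 (A x + S x)\<bar>)"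
    using int_sgn integral_norm_bound[of p "\<lambda>x. sgn01 (A x) - sgn01 (A x + S x)"] by simp
  also have "\<dots> \<le> measure_pmf.expectation p (\<lambda>x. (S x)\<^sup>2 / \<delta>\<^sup>2 + of_bool (\<bar>A x\<bar> < \<delta>))"
    by (rule integral_mono) (use int_sgn int_S int_A sgn01_shift_le[OF \<delta>] in simp_all)
  also have "\<dots> = measure_pmf.expectation p (\<lambda>x. (S x)\<^sup>2) / \<delta>\<^sup>2 + measure_pmf.prob p {x. \<bar>A x\<bar> < \<delta>}"
    using int_S int_A by (simp add: expectation_of_bool)
  finally show ?thesis .
qed

text \<open>Matching first moments of \<open>D\<^sub>0\<close> and \<open>D\<^sub>1\<close> make the recentering correct for both values of \<open>b\<close>.\<close>

lemma threshold_shift_bound: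
  fixes w wt :: "nat \<Rightarrow> nat \<Rightarrow> real" and \<theta> \<delta> :: real
  assumes k: "k > 0" and inj: "inj_on vs {..<k}" and r: "r < k" and \<pi>: "\<forall>j<M. \<pi> r j < N"
    and small: "\<forall>l<N. card {j\<in>{..<M}. \<pi> r j = l} \<le> d"
    and moment: "measure_pmf.expectation (D b) (\<lambda>x. of_bool (x r) :: real) =
                 measure_pmf.expectation (D False) (\<lambda>x. of_bool (x r))"
    and wt: "\<And>i. i \<noteq> r \<Longrightarrow> wt i = w i"
    and g: "\<And>s. s < L \<Longrightarrow> g s < M" and g_inj: "inj_on g {..<L}"
    and halving: "\<And>s. Suc s < L \<Longrightarrow> 2 * \<bar>wt r (g (Suc s))\<bar> \<le> \<bar>wt r (g s)\<bar>"
    and last: "2 * \<delta> \<le> \<bar>wt r (g (L - 1))\<bar>" and \<delta>: "0 < \<delta>"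
  defines "a \<equiv> (\<lambda>j. w r j - wt r j)"
  defines "\<theta>t \<equiv> \<theta> - measure_pmf.expectation (edge_dist k N M vs \<pi> D False) (\<lambda>y. ip M a (y (vs r)))"
  defines "h \<equiv> (\<lambda>y. sgn01 ((\<Sum>i<k. ip M (w i) (y (vs i))) - \<theta>))"
  defines "ht \<equiv> (\<lambda>y. sgn01 ((\<Sum>i<k. ip M (wt i) (y (vs i))) - \<theta>t))"
  shows "\<bar>measure_pmf.expectation (edge_dist k N M vs \<pi> D b) ht - measure_pmf.expectation (edge_dist k N M vs \<pi> D b) h\<bar>
     \<le> (2 + 2 * real d) * (\<Sum>j<M. (a j)\<^sup>2) / \<delta>\<^sup>2 + (1 - 1 / (real k)\<^sup>2 / 2) ^ L"
proof -
  let ?E = "edge_dist k N M vs \<pi> D b"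
  define \<mu> where "\<mu> = (\<Sum>j<M. a j) * measure_pmf.expectation (D b) (\<lambda>x. noisy_mean k (x r))"
  define A where "A y = (\<Sum>i<k. ip M (wt i) (y (vs i))) - \<theta>t" for y :: "nat \<Rightarrow> nat \<Rightarrow> bool"
  define S where "S y = ip M a (y (vs r)) - \<mu>" for y :: "nat \<Rightarrow> nat \<Rightarrow> bool"
  have \<theta>t: "\<theta>t = \<theta> - \<mu>"
    using expectation_ip_edge_dist[where a=a and D=D and b=False and \<pi>=\<pi> and r=r and M=M and N=N, OF k inj r \<pi>] moment
    by (simp add: \<theta>t_def \<mu>_def expectation_noisy_mean[OF k])
  have ip_split: "ip M (w i) v = ip M (wt i) v + (if i = r then ip M a v else 0)" for i v
    using wt[of i] by (auto simp: ip_def a_def left_diff_distrib sum_subtractf)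
  have "h y = sgn01 (A y + S y)" "ht y = sgn01 (A y)" for y
    using r by (simp_all add: h_def ht_def A_def S_def \<theta>t ip_split sum.distrib algebra_simps)
  then have tests: "h = (\<lambda>y. sgn01 (A y + S y))" "ht = (\<lambda>y. sgn01 (A y))" by auto
  have S_bound: "\<bar>S y\<bar> \<le> (\<Sum>j<M. \<bar>a j\<bar>) + \<bar>\<mu>\<bar>" for y
    using abs_ip_le[of M a "y (vs r)"] by (simp add: S_def)
  have "\<bar>measure_pmf.expectation ?E ht - measure_pmf.expectation ?E h\<bar>
        \<le> measure_pmf.expectation ?E (\<lambda>y. (S y)\<^sup>2) / \<delta>\<^sup>2 + measure_pmf.prob ?E {y. \<bar>A y\<bar> < \<delta>}"
    unfolding tests by (rule expectation_sgn01_shift_le[OF \<delta> S_bound])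
  also have "\<dots> \<le> (2 + 2 * real d) * (\<Sum>j<M. (a j)\<^sup>2) / \<delta>\<^sup>2 + (1 - 1 / (real k)\<^sup>2 / 2) ^ L"
  proof (rule add_mono)
    show "measure_pmf.expectation ?E (\<lambda>y. (S y)\<^sup>2) / \<delta>\<^sup>2 \<le> (2 + 2 * real d) * (\<Sum>j<M. (a j)\<^sup>2) / \<delta>\<^sup>2"
      using edge_variance_le[where a=a and D=D and b=b and \<pi>=\<pi> and r=r and M=M and N=N, OF k inj r \<pi> small]
      by (simp add: S_def \<mu>_def divide_right_mono)
    show "measure_pmf.prob ?E {y. \<bar>A y\<bar> < \<delta>} \<le> (1 - 1 / (real k)\<^sup>2 / 2) ^ L"
      unfolding A_def by (rule edge_small_ball[where wt=wt and g=g and L=L and r=r, OF k inj r g g_inj halving last])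
  qed
  finally show ?thesis .
qed

lemma idx_order_props:
  "distinct (idx_order n u)" "set (idx_order n u) = {..<n}" "length (idx_order n u) = n"
  unfolding idx_order_def by auto

lemma sigma2_nonneg: "0 \<le> sigma2 n u m"
  unfolding sigma2_def by (auto intro: sum_nonneg)

lemma sigma2_step: "m < n \<Longrightarrow> sigma2 n u m = (u (idx_order n u ! m))\<^sup>2 + sigma2 n u (Suc m)"
  unfolding sigma2_def by (rule sum.atLeast_Suc_lessThan)

lemma Cset_head_large:
  assumes "0 \<le> \<tau>"
  shows "card (Cset \<tau> n u) \<le> n \<and>
         (\<forall>m < card (Cset \<tau> n u). m < n \<and> \<tau> * sqrt (sigma2 n u m) < \<bar>u (idx_order n u ! m)\<bar>)"
proof -
  let ?ord = "idx_order n u"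
  define P where "P m = (m < n \<and> \<bar>u (?ord ! m)\<bar> \<le> \<tau> * sqrt (sigma2 n u m))" for m
  show ?thesis
  proof (cases "\<exists>m. P m")
    case True
    define c where "c = (LEAST m. P m)"
    have "P c" unfolding c_def using True by (metis LeastI)
    then have cn: "c < n" by (simp add: P_def)
    have "Cset \<tau> n u = set (take c ?ord)" using True unfolding Cset_def c_def P_def[abs_def] Let_def by simp
    then have "card (Cset \<tau> n u) = c" using cn idx_order_props[of n u] by (simp add: distinct_card)
    moreover have "m < n \<and> \<tau> * sqrt (sigma2 n u m) < \<bar>u (?ord ! m)\<bar>" if "m < c" for m
      using not_less_Least[OF that[unfolded c_def]] that cn by (auto simp: P_def)
    ultimately show ?thesis using cn by auto
  next
    case False
    have "Cset \<tau> n u = {..<n}" using False unfolding Cset_def P_def[abs_def] Let_def by auto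
    then show ?thesis using False by (auto simp: P_def not_le)
  qed
qed

lemma sigma2_decay:
  fixes \<tau> :: real
  assumes \<tau>: "0 \<le> \<tau>" "\<tau> \<le> 1" and mj: "m + j \<le> card (Cset \<tau> n u)"
  shows "sigma2 n u (m + j) \<le> (1 - \<tau>\<^sup>2) ^ j * sigma2 n u m"
  using mj
proof (induction j)
  case 0 then show ?case by simp
next
  case (Suc j)
  have IH: "sigma2 n u (m + j) \<le> (1 - \<tau>\<^sup>2) ^ j * sigma2 n u m" using Suc by simp
  have "m + j < card (Cset \<tau> n u)" using Suc.prems by simp
  with Cset_head_large[OF \<tau>(1), of n u]
  have mn: "m + j < n" and large: "\<tau> * sqrt (sigma2 n u (m + j)) < \<bar>u (idx_order n u ! (m + j))\<bar>" by auto
  have "(\<tau> * sqrt (sigma2 n u (m + j)))\<^sup>2 \<le> \<bar>u (idx_order n u ! (m + j))\<bar>\<^sup>2"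
    using large \<tau> sigma2_nonneg[of n u "m+j"] by (intro power_mono) auto
  then have "\<tau>\<^sup>2 * sigma2 n u (m + j) \<le> (u (idx_order n u ! (m + j)))\<^sup>2"
    by (simp add: power_mult_distrib sigma2_nonneg)
  then have "sigma2 n u (Suc (m + j)) \<le> (1 - \<tau>\<^sup>2) * sigma2 n u (m + j)"
    using sigma2_step[OF mn, of u] by (simp add: algebra_simps)
  also have "\<dots> \<le> (1 - \<tau>\<^sup>2) * ((1 - \<tau>\<^sup>2) ^ j * sigma2 n u m)"
    by (rule mult_left_mono[OF IH]) (use \<tau> in \<open>simp add: power_le_one\<close>)
  finally show ?case by simp
qed

lemma Cset_entry_bounds:
  fixes \<tau> :: real
  assumes \<tau>: "0 < \<tau>" "\<tau> \<le> 1" and m: "m < card (Cset \<tau> n u)"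
  shows "0 < \<bar>u (idx_order n u ! m)\<bar>"
    and "m + j \<le> card (Cset \<tau> n u) \<Longrightarrow> m + j < n \<Longrightarrow>
           \<bar>u (idx_order n u ! (m + j))\<bar>\<^sup>2 \<le> (1 - \<tau>\<^sup>2) ^ j * \<bar>u (idx_order n u ! m)\<bar>\<^sup>2 / \<tau>\<^sup>2"
    and "m + j \<le> card (Cset \<tau> n u) \<Longrightarrow>
           sigma2 n u (m + j) \<le> (1 - \<tau>\<^sup>2) ^ j * \<bar>u (idx_order n u ! m)\<bar>\<^sup>2 / \<tau>\<^sup>2"
proof -
  let ?v = "\<lambda>m. \<bar>u (idx_order n u ! m)\<bar>"
  have large: "\<tau> * sqrt (sigma2 n u m) < ?v m" using Cset_head_large[of \<tau> n u] \<tau> m by auto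
  moreover have nonneg: "0 \<le> \<tau> * sqrt (sigma2 n u m)" using \<tau> sigma2_nonneg[of n u m] by simp
  ultimately show "0 < ?v m" by linarith
  have "(\<tau> * sqrt (sigma2 n u m))\<^sup>2 \<le> (?v m)\<^sup>2" using large nonneg by (intro power_mono) auto
  then have \<sigma>m: "sigma2 n u m \<le> (?v m)\<^sup>2 / \<tau>\<^sup>2"
    using \<tau> sigma2_nonneg[of n u m] by (simp add: power_mult_distrib field_simps)
  have q: "0 \<le> (1 - \<tau>\<^sup>2) ^ j" using \<tau> by (simp add: power_le_one)
  assume mj: "m + j \<le> card (Cset \<tau> n u)"
  have "sigma2 n u (m + j) \<le> (1 - \<tau>\<^sup>2) ^ j * sigma2 n u m"
    by (rule sigma2_decay) (use \<tau> mj in auto)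
  also have "\<dots> \<le> (1 - \<tau>\<^sup>2) ^ j * ((?v m)\<^sup>2 / \<tau>\<^sup>2)" by (rule mult_left_mono[OF \<sigma>m q])
  finally show tail: "sigma2 n u (m + j) \<le> (1 - \<tau>\<^sup>2) ^ j * (?v m)\<^sup>2 / \<tau>\<^sup>2" by simp
  assume "m + j < n"
  then have "(?v (m + j))\<^sup>2 \<le> sigma2 n u (m + j)"
    using sigma2_step[of "m + j" n u] sigma2_nonneg[of n u "Suc (m + j)"] by simp
  then show "(?v (m + j))\<^sup>2 \<le> (1 - \<tau>\<^sup>2) ^ j * (?v m)\<^sup>2 / \<tau>\<^sup>2" using tail by linarith
qed

lemma Bset_nth_iff:
  assumes "m < n"
  shows "idx_order n u ! m \<in> Bset t n u \<longleftrightarrow> m < nat \<lfloor>t\<rfloor>"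
proof -
  let ?ord = "idx_order n u"
  have "idx_order n u ! m \<in> Bset t n u \<longleftrightarrow> (\<exists>i<min (nat \<lfloor>t\<rfloor>) n. ?ord ! i = ?ord ! m)"
    unfolding Bset_def in_set_conv_nth using idx_order_props(3)[of n u] by auto
  also have "\<dots> \<longleftrightarrow> m < nat \<lfloor>t\<rfloor>"
    using nth_eq_iff_index_eq[OF idx_order_props(1)] idx_order_props(3)[of n u] assms by auto
  finally show ?thesis .
qed

lemma truncation_error_eq_sigma2:
  "(\<Sum>j<n. (u j - truncate u (Bset t n u) j)\<^sup>2) = sigma2 n u (nat \<lfloor>t\<rfloor>)"
proof -
  let ?ord = "idx_order n u"
  have "(\<Sum>j<n. (u j - truncate u (Bset t n u) j)\<^sup>2) = (\<Sum>m<n. (u (?ord ! m) - truncate u (Bset t n u) (?ord ! m))\<^sup>2)"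
    by (rule sum.reindex_bij_betw[symmetric], rule bij_betw_nth) (use idx_order_props[of n u] in auto)
  also have "\<dots> = (\<Sum>m<n. if m < nat \<lfloor>t\<rfloor> then 0 else (u (?ord ! m))\<^sup>2)"
    by (intro sum.cong refl) (auto simp: truncate_def Bset_nth_iff)
  also have "\<dots> = (\<Sum>m\<in>{nat \<lfloor>t\<rfloor>..<n}. (u (?ord ! m))\<^sup>2)"
    by (rule sum.mono_neutral_cong_right) auto
  finally show ?thesis by (simp add: sigma2_def)
qed

lemma spaced_halving_indices:
  fixes u :: "nat \<Rightarrow> real" and \<tau> t :: real
  assumes \<tau>: "0 < \<tau>" "\<tau> \<le> 1" and G: "0 < G" and R: "0 < R"
    and G_decay: "(1 - \<tau>\<^sup>2) ^ G \<le> \<tau>\<^sup>2 / 4"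
    and size: "(L - 1) * G + R \<le> nat \<lfloor>t\<rfloor>" and Ct: "t \<le> real (card (Cset \<tau> n u))"
  defines "g \<equiv> \<lambda>s. idx_order n u ! (s * G)"
  shows "\<forall>s<L. g s < n \<and> g s \<in> Bset t n u" and "inj_on g {..<L}"
    and "\<forall>s. Suc s < L \<longrightarrow> 2 * \<bar>u (g (Suc s))\<bar> \<le> \<bar>u (g s)\<bar>"
    and "0 < L \<Longrightarrow> 0 < \<bar>u (g (L - 1))\<bar>"
    and "0 < L \<Longrightarrow> (\<Sum>j<n. (u j - truncate u (Bset t n u) j)\<^sup>2) \<le> (1 - \<tau>\<^sup>2) ^ R * \<bar>u (g (L - 1))\<bar>\<^sup>2 / \<tau>\<^sup>2"
proof -
  let ?ord = "idx_order n u" and ?c = "card (Cset \<tau> n u)" and ?T = "nat \<lfloor>t\<rfloor>"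
  have T_c: "?T \<le> ?c" using Ct by linarith
  have c_n: "?c \<le> n" using Cset_head_large[of \<tau> n u] \<tau> by simp
  have pos_T: "s * G < ?T" if "s < L" for s
  proof -
    have "s * G \<le> (L - 1) * G" using that by (intro mult_right_mono) auto
    then show ?thesis using size R by linarith
  qed
  have pos_n: "s * G < n" if "s < L" for s using pos_T[OF that] T_c c_n by linarith
  show "\<forall>s<L. g s < n \<and> g s \<in> Bset t n u"
    using pos_n pos_T idx_order_props[of n u] by (auto simp: g_def Bset_nth_iff)
  show "inj_on g {..<L}"
  proof (rule inj_onI)
    fix s s' assume "s \<in> {..<L}" "s' \<in> {..<L}" "g s = g s'"
    then have "s * G = s' * G"
      using nth_eq_iff_index_eq[OF idx_order_props(1)] pos_n idx_order_props(3)[of n u] by (auto simp: g_def)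
    then show "s = s'" using G by simp
  qed
  show "\<forall>s. Suc s < L \<longrightarrow> 2 * \<bar>u (g (Suc s))\<bar> \<le> \<bar>u (g s)\<bar>"
  proof (intro allI impI)
    fix s assume s: "Suc s < L"
    have "\<bar>u (g (Suc s))\<bar>\<^sup>2 \<le> (1 - \<tau>\<^sup>2) ^ G * \<bar>u (g s)\<bar>\<^sup>2 / \<tau>\<^sup>2"
      using Cset_entry_bounds(2)[OF \<tau>, of "s * G" n u G] pos_T[OF s] pos_n[OF s] T_c
      by (simp add: g_def add.commute)
    also have "\<dots> \<le> \<tau>\<^sup>2 / 4 * \<bar>u (g s)\<bar>\<^sup>2 / \<tau>\<^sup>2"
      by (intro divide_right_mono mult_right_mono G_decay) auto
    finally have "(2 * \<bar>u (g (Suc s))\<bar>)\<^sup>2 \<le> \<bar>u (g s)\<bar>\<^sup>2" using \<tau> by (simp add: power_mult_distrib)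
    then show "2 * \<bar>u (g (Suc s))\<bar> \<le> \<bar>u (g s)\<bar>" by (rule power2_le_imp_le) simp
  qed
  assume L: "0 < L"
  define l where "l = (L - 1) * G"
  have l_c: "l < ?c" using pos_T[of "L - 1"] L T_c by (simp add: l_def)
  show "0 < \<bar>u (g (L - 1))\<bar>" using Cset_entry_bounds(1)[OF \<tau> l_c] by (simp add: g_def l_def)
  have "sigma2 n u (l + (?T - l)) \<le> (1 - \<tau>\<^sup>2) ^ (?T - l) * \<bar>u (?ord ! l)\<bar>\<^sup>2 / \<tau>\<^sup>2"
    by (rule Cset_entry_bounds(3)[OF \<tau> l_c]) (use l_c T_c pos_T[of "L - 1"] L in \<open>simp add: l_def\<close>)
  also have "\<dots> \<le> (1 - \<tau>\<^sup>2) ^ R * \<bar>u (?ord ! l)\<bar>\<^sup>2 / \<tau>\<^sup>2"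
    using size \<tau> by (intro divide_right_mono mult_right_mono power_decreasing) (auto simp: l_def power_le_one)
  finally show "(\<Sum>j<n. (u j - truncate u (Bset t n u) j)\<^sup>2) \<le> (1 - \<tau>\<^sup>2) ^ R * \<bar>u (g (L - 1))\<bar>\<^sup>2 / \<tau>\<^sup>2"
    using pos_T[of "L - 1"] L by (simp add: truncation_error_eq_sigma2 g_def l_def)
qed

text \<open>Number of steps of a contraction by \<open>1 - y\<close> needed to get below \<open>1/z\<close>, via \<open>1 - y \<le> e\<^sup>-\<^sup>y\<close>.\<close>

lemma iterations_for_decay:
  fixes y z :: real
  assumes y: "0 < y" "y \<le> 1" and z: "1 < z"
  defines "n \<equiv> nat \<lceil>ln z / y\<rceil>"
  shows "0 < n" and "(1 - y) ^ n \<le> 1 / z" and "real n \<le> ln z / y + 1"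
proof -
  have ln_pos: "0 < ln z / y" using y z by simp
  have n_ge: "ln z / y \<le> real n" unfolding n_def by linarith
  show "0 < n" using n_ge ln_pos by linarith
  show "real n \<le> ln z / y + 1" unfolding n_def using ln_pos by linarith
  have "(1 - y) ^ n \<le> exp (- y) ^ n"
    using exp_ge_add_one_self[of "- y"] y by (intro power_mono) auto
  also have "\<dots> = exp (- (y * real n))" by (simp add: exp_of_nat_mult[symmetric] mult.commute)
  also have "\<dots> \<le> exp (- ln z)" using n_ge y by (simp add: divide_le_eq mult.commute)
  also have "\<dots> = 1 / z" using z by (simp add: exp_minus exp_ln inverse_eq_divide)
  finally show "(1 - y) ^ n \<le> 1 / z" .
qed

text \<open>The budget \<open>t\<close> of the statement exceeds \<open>L G + R\<close> once \<open>k\<close> is large enough that the asymptotic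
  inequality \<open>budget\<close> below holds (it compares two expressions of order \<open>k\<^sup>2 ln\<^sup>2 k\<close>).\<close>

lemma spacing_within_budget:
  fixes k L G R :: nat
  assumes k2: "2 \<le> k"
    and budget: "(2 * (real k)\<^sup>2 * (ln 2 + 2 * ln (real k)) + 1) * (ln 4 + 26 * ln (real k) + 1)
                   + ln 32 + 28 * ln (real k) + real k * ln 4 + 1
               \<le> 4 * (real k)\<^sup>2 * (ln 2 + ln (real k)) * (52 * ln (real k)) + 10 * real k * ln 4"
    and L: "real L \<le> 2 * (real k)\<^sup>2 * (ln 2 + 2 * ln (real k)) + 1"
    and G: "real G \<le> real k ^ 26 * (ln 4 + 26 * ln (real k)) + 1"
    and R: "real R \<le> real k ^ 26 * (ln 32 + 28 * ln (real k) + real k * ln 4) + 1"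
  defines "\<tau> \<equiv> 1 / (real k)^13"
  defines "t \<equiv> (1 / \<tau>\<^sup>2) * (real_of_int (\<lceil>4 * (real k)\<^sup>2 * ln (2 * real k)\<rceil> * \<lceil>4 * ln (1 / \<tau>)\<rceil>)
                           + ln (1 / \<tau>) + 10 * ln (real ((4::nat)^k)))"
  shows "(L - 1) * G + R \<le> nat \<lfloor>t\<rfloor>"
proof -
  define P where "P = real k ^ 26"
  define lk where "lk = ln (real k)"
  have lk: "0 < lk" using k2 by (simp add: lk_def)
  have P1: "1 \<le> P" using k2 by (simp add: P_def one_le_power)
  have ln\<tau>: "ln (1 / \<tau>) = 13 * lk" using k2 by (simp add: \<tau>_def lk_def ln_realpow)
  define A1 where "A1 = \<lceil>4 * (real k)\<^sup>2 * ln (2 * real k)\<rceil>"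
  define A2 where "A2 = \<lceil>4 * ln (1 / \<tau>)\<rceil>"
  have A1: "4 * (real k)\<^sup>2 * (ln 2 + lk) \<le> real_of_int A1"
    using k2 by (simp add: A1_def lk_def ln_mult)
  have A2: "52 * lk \<le> real_of_int A2" unfolding A2_def ln\<tau> by linarith
  have "4 * (real k)\<^sup>2 * (ln 2 + lk) * (52 * lk) \<le> real_of_int A1 * real_of_int A2"
  proof (rule mult_mono[OF A1 A2])
    have "0 \<le> 4 * (real k)\<^sup>2 * (ln 2 + lk)" using lk by simp
    then show "0 \<le> real_of_int A1" using A1 by linarith
  qed (use lk in simp)
  then have "P * (4 * (real k)\<^sup>2 * (ln 2 + lk) * (52 * lk) + 10 * real k * ln 4)
             \<le> P * (real_of_int (A1 * A2) + 13 * lk + 10 * (real k * ln 4))"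
    using lk P1 by (intro mult_left_mono) auto
  also have "\<dots> = t"
  proof -
    have inv: "1 / \<tau>\<^sup>2 = P" by (simp add: \<tau>_def P_def power_divide flip: power_mult)
    have lnd: "ln (real ((4::nat) ^ k)) = real k * ln 4" by (simp add: ln_realpow)
    show ?thesis by (simp only: t_def inv A1_def[symmetric] A2_def[unfolded ln\<tau>, symmetric] ln\<tau> lnd)
  qed
  finally have t_ge: "P * (4 * (real k)\<^sup>2 * (ln 2 + lk) * (52 * lk) + 10 * real k * ln 4) \<le> t" .
  have LG: "real L * real G \<le> (2 * (real k)\<^sup>2 * (ln 2 + 2 * lk) + 1) * (P * (ln 4 + 26 * lk + 1))"
  proof -
    have "real L * real G \<le> (2 * (real k)\<^sup>2 * (ln 2 + 2 * lk) + 1) * (P * (ln 4 + 26 * lk) + 1)"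
      using L G lk by (intro mult_mono) (auto simp: P_def lk_def)
    also have "\<dots> \<le> (2 * (real k)\<^sup>2 * (ln 2 + 2 * lk) + 1) * (P * (ln 4 + 26 * lk + 1))"
      using P1 lk by (intro mult_left_mono) (auto simp: algebra_simps)
    finally show ?thesis .
  qed
  have "(L - 1) * G + R \<le> L * G + R" by (simp add: mult_le_mono1)
  then have "real ((L - 1) * G + R) \<le> real L * real G + real R" by (metis of_nat_add of_nat_le_iff of_nat_mult)
  also have "\<dots> \<le> P * ((2 * (real k)\<^sup>2 * (ln 2 + 2 * lk) + 1) * (ln 4 + 26 * lk + 1)
                        + ln 32 + 28 * lk + real k * ln 4 + 1)"
    using LG R[folded P_def lk_def] P1 by (simp add: algebra_simps)
  also have "\<dots> \<le> P * (4 * (real k)\<^sup>2 * (ln 2 + lk) * (52 * lk) + 10 * real k * ln 4)"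
    using budget P1 by (intro mult_left_mono) (auto simp: lk_def)
  also have "\<dots> \<le> t" by (rule t_ge)
  finally show ?thesis by linarith
qed

text \<open>The length \<open>R\<close> of the stretch after the last halving position: it makes the variance term
  \<open>(2 + 2d) \<cdot> 4 (1 - \<tau>\<^sup>2)\<^sup>R / \<tau>\<^sup>2\<close> of the truncation bound at most \<open>1/(2k\<^sup>2)\<close>; the explicit upper
  bound on \<open>R\<close> feeds into \<open>spacing_within_budget\<close>.\<close>

lemma tail_length_choice:
  fixes k :: nat
  assumes k2: "2 \<le> k"
  defines "\<tau> \<equiv> 1 / (real k)^13"
  defines "d \<equiv> (4::nat)^k"
  defines "R \<equiv> nat \<lceil>ln (16 * (real k)\<^sup>2 * (1 + real d) / \<tau>\<^sup>2) / \<tau>\<^sup>2\<rceil>"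
  shows "0 < R" and "real R \<le> real k ^ 26 * (ln 32 + 28 * ln (real k) + real k * ln 4) + 1"
    and "(2 + 2 * real d) * (4 * (1 - \<tau>\<^sup>2) ^ R / \<tau>\<^sup>2) \<le> 1 / (2 * (real k)\<^sup>2)"
proof -
  define P where "P = real k ^ 26"
  have P1: "1 \<le> P" using k2 by (simp add: P_def one_le_power)
  have x: "\<tau>\<^sup>2 = 1 / P" by (simp add: \<tau>_def P_def power_divide flip: power_mult)
  have x01: "0 < \<tau>\<^sup>2" "\<tau>\<^sup>2 \<le> 1" using P1 by (auto simp: x)
  have k4: "4 \<le> (real k)\<^sup>2" using k2 power_mono[of 2 "real k" 2] by simp
  have d1: "1 \<le> real d" by (simp add: d_def)
  define z where "z = 16 * (real k)\<^sup>2 * (1 + real d) / \<tau>\<^sup>2"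
  have z: "z = 16 * ((real k)\<^sup>2 * (1 + real d) * P)" by (simp add: z_def x)
  have z1: "1 < z"
  proof -
    have "1 * 1 \<le> (real k)\<^sup>2 * (1 + real d)" by (rule mult_mono) (use k4 d1 in auto)
    then have "1 * 1 \<le> (real k)\<^sup>2 * (1 + real d) * P" by (intro mult_mono) (use P1 in auto)
    then show ?thesis unfolding z by linarith
  qed
  note R_iter = iterations_for_decay[OF x01 z1, folded R_def[folded z_def]]
  show "0 < R" by (rule R_iter(1))
  have ln_z: "ln z \<le> ln 32 + 28 * ln (real k) + real k * ln 4"
  proof -
    have "ln z = ln 16 + 2 * ln (real k) + ln (1 + real d) + 26 * ln (real k)"
      using k2 d1 P1 by (simp add: z ln_mult P_def ln_realpow)
    also have "ln (1 + real d) \<le> ln (2 * real d)" using d1 by simp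
    also have "ln (2 * real d) = ln 2 + real k * ln 4" using d1 by (simp add: ln_mult d_def ln_realpow)
    finally show ?thesis using ln_mult[of 16 2] by simp
  qed
  have "ln z / \<tau>\<^sup>2 = P * ln z" by (simp add: x)
  moreover have "P * ln z \<le> P * (ln 32 + 28 * ln (real k) + real k * ln 4)"
    using ln_z P1 by (intro mult_left_mono) auto
  ultimately show "real R \<le> real k ^ 26 * (ln 32 + 28 * ln (real k) + real k * ln 4) + 1"
    using R_iter(3) by (simp add: P_def)
  have "(2 + 2 * real d) * (4 * (1 - \<tau>\<^sup>2) ^ R / \<tau>\<^sup>2) \<le> (2 + 2 * real d) * (4 * (1 / z) / \<tau>\<^sup>2)"
    using R_iter(2) x01 by (intro mult_left_mono divide_right_mono) auto
  also have "\<dots> = 8 * (1 + real d) / (z * \<tau>\<^sup>2)" by (simp add: algebra_simps)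
  also have "z * \<tau>\<^sup>2 = 16 * (real k)\<^sup>2 * (1 + real d)" using x01 by (simp add: z_def)
  also have "8 * (1 + real d) / (16 * (real k)\<^sup>2 * (1 + real d)) = 8 / (16 * (real k)\<^sup>2)"
    by (rule nonzero_mult_divide_mult_cancel_right) (use d1 in auto)
  finally show "(2 + 2 * real d) * (4 * (1 - \<tau>\<^sup>2) ^ R / \<tau>\<^sup>2) \<le> 1 / (2 * (real k)\<^sup>2)" by simp
qed

lemma parameter_choice:
  fixes k :: nat
  assumes k2: "2 \<le> k"
    and budget: "(2 * (real k)\<^sup>2 * (ln 2 + 2 * ln (real k)) + 1) * (ln 4 + 26 * ln (real k) + 1)
                   + ln 32 + 28 * ln (real k) + real k * ln 4 + 1
               \<le> 4 * (real k)\<^sup>2 * (ln 2 + ln (real k)) * (52 * ln (real k)) + 10 * real k * ln 4"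
  defines "\<tau> \<equiv> 1 / (real k)^13"
  defines "d \<equiv> (4::nat)^k"
  defines "t \<equiv> (1 / \<tau>\<^sup>2) * (real_of_int (\<lceil>4 * (real k)\<^sup>2 * ln (2 * real k)\<rceil> * \<lceil>4 * ln (1 / \<tau>)\<rceil>)
                           + ln (1 / \<tau>) + 10 * ln (real d))"
  defines "G \<equiv> nat \<lceil>ln (4 / \<tau>\<^sup>2) / \<tau>\<^sup>2\<rceil>"
  defines "L \<equiv> nat \<lceil>2 * (real k)\<^sup>2 * ln (2 * (real k)\<^sup>2)\<rceil>"
  defines "R \<equiv> nat \<lceil>ln (16 * (real k)\<^sup>2 * (1 + real d) / \<tau>\<^sup>2) / \<tau>\<^sup>2\<rceil>"
  shows "0 < \<tau>" "\<tau> \<le> 1" "0 < G" "0 < L" "0 < R" "(1 - \<tau>\<^sup>2) ^ G \<le> \<tau>\<^sup>2 / 4"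
    and "(L - 1) * G + R \<le> nat \<lfloor>t\<rfloor>"
    and "(2 + 2 * real d) * (4 * (1 - \<tau>\<^sup>2) ^ R / \<tau>\<^sup>2) + (1 - 1 / (real k)\<^sup>2 / 2) ^ L \<le> 1 / (real k)\<^sup>2"
proof -
  define P where "P = real k ^ 26"
  define lk where "lk = ln (real k)"
  have P1: "1 \<le> P" using k2 by (simp add: P_def one_le_power)
  have x: "\<tau>\<^sup>2 = 1 / P" by (simp add: \<tau>_def P_def power_divide flip: power_mult)
  have x01: "0 < \<tau>\<^sup>2" "\<tau>\<^sup>2 \<le> 1" using P1 by (auto simp: x)
  show "0 < \<tau>" "\<tau> \<le> 1" using k2 by (auto simp: \<tau>_def power_le_one one_le_power)
  have k4: "4 \<le> (real k)\<^sup>2" using k2 power_mono[of 2 "real k" 2] by simp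
  note G_iter = iterations_for_decay[OF x01, of "4 / \<tau>\<^sup>2", folded G_def]
  have "1 < 4 / \<tau>\<^sup>2" using x01 by (simp add: field_simps)
  then have G: "0 < G" "(1 - \<tau>\<^sup>2) ^ G \<le> \<tau>\<^sup>2 / 4" "real G \<le> P * (ln 4 + 26 * lk) + 1"
    using G_iter P1 k2 by (auto simp: x ln_mult P_def lk_def ln_realpow mult.commute)
  then show "0 < G" "(1 - \<tau>\<^sup>2) ^ G \<le> \<tau>\<^sup>2 / 4" by simp_all
  have L_eq: "L = nat \<lceil>ln (2 * (real k)\<^sup>2) / (1 / (real k)\<^sup>2 / 2)\<rceil>" by (simp add: L_def field_simps)
  note L_iter = iterations_for_decay[of "1 / (real k)\<^sup>2 / 2" "2 * (real k)\<^sup>2", folded L_eq]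
  have L: "0 < L" "(1 - 1 / (real k)\<^sup>2 / 2) ^ L \<le> 1 / (2 * (real k)\<^sup>2)"
      "real L \<le> 2 * (real k)\<^sup>2 * (ln 2 + 2 * lk) + 1"
    using L_iter k4 k2 by (auto simp: field_simps ln_mult ln_realpow lk_def)
  then show "0 < L" by simp
  note R = tail_length_choice[OF k2, folded \<tau>_def d_def, folded R_def]
  show "0 < R" by (rule R(1))
  show "(L - 1) * G + R \<le> nat \<lfloor>t\<rfloor>"
    unfolding t_def \<tau>_def d_def
    by (rule spacing_within_budget[OF k2 budget L(3)[unfolded lk_def] G(3)[unfolded P_def lk_def] R(2)])
  show "(2 + 2 * real d) * (4 * (1 - \<tau>\<^sup>2) ^ R / \<tau>\<^sup>2) + (1 - 1 / (real k)\<^sup>2 / 2) ^ L \<le> 1 / (real k)\<^sup>2"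
    using R(3) L(2) by simp
qed

lemma truncation_changes_little:
  fixes k N M :: nat and vs :: "nat \<Rightarrow> nat" and \<pi> :: "nat \<Rightarrow> nat \<Rightarrow> nat"
    and D :: "bool \<Rightarrow> (nat \<Rightarrow> bool) pmf" and w :: "nat \<Rightarrow> nat \<Rightarrow> real" and \<theta> :: real and r :: nat
  assumes k2: "2 \<le> k"
    and budget: "(2 * (real k)\<^sup>2 * (ln 2 + 2 * ln (real k)) + 1) * (ln 4 + 26 * ln (real k) + 1)
                   + ln 32 + 28 * ln (real k) + real k * ln 4 + 1
               \<le> 4 * (real k)\<^sup>2 * (ln 2 + ln (real k)) * (52 * ln (real k)) + 10 * real k * ln 4"
  defines "\<tau> \<equiv> 1 / (real k)^13"
  defines "d \<equiv> (4::nat)^k"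
  defines "t \<equiv> (1 / \<tau>\<^sup>2) * (real_of_int (\<lceil>4 * (real k)\<^sup>2 * ln (2 * real k)\<rceil> * \<lceil>4 * ln (1 / \<tau>)\<rceil>)
                           + ln (1 / \<tau>) + 10 * ln (real d))"
  defines "E \<equiv> edge_dist k N M vs \<pi> D"
  defines "wt \<equiv> (\<lambda>i. if i = r then truncate (w r) (Bset t M (w r)) else w i)"
  defines "a \<equiv> (\<lambda>j. w r j - wt r j)"
  defines "\<theta>t \<equiv> \<theta> - measure_pmf.expectation (E False) (\<lambda>y. ip M a (y (vs r)))"
  defines "h \<equiv> (\<lambda>y. sgn01 ((\<Sum>i<k. ip M (w i) (y (vs i))) - \<theta>))"
  defines "ht \<equiv> (\<lambda>y. sgn01 ((\<Sum>i<k. ip M (wt i) (y (vs i))) - \<theta>t))"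
  assumes inj: "inj_on vs {..<k}"
    and \<pi>: "\<forall>i<k. \<forall>j<M. \<pi> i j < N"
    and moments: "\<forall>S::nat multiset. set_mset S \<subseteq> {..<k} \<and> size S \<le> 4 \<longrightarrow>
        measure_pmf.expectation (D False) (\<lambda>x. \<Prod>i\<in>#S. of_bool (x i) :: real) =
        measure_pmf.expectation (D True) (\<lambda>x. \<Prod>i\<in>#S. of_bool (x i) :: real)"
    and small: "\<forall>i<k. \<forall>l<N. card {j\<in>{..<M}. \<pi> i j = l} \<le> d"
    and r: "r < k"
    and Ct: "real (card (Cset \<tau> M (w r))) \<ge> t"
  shows "\<forall>b. \<bar>measure_pmf.expectation (E b) ht - measure_pmf.expectation (E b) h\<bar> \<le> 1 / (real k)\<^sup>2"
proof
  fix b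
  define G where "G = nat \<lceil>ln (4 / \<tau>\<^sup>2) / \<tau>\<^sup>2\<rceil>"
  define L where "L = nat \<lceil>2 * (real k)\<^sup>2 * ln (2 * (real k)\<^sup>2)\<rceil>"
  define R where "R = nat \<lceil>ln (16 * (real k)\<^sup>2 * (1 + real d) / \<tau>\<^sup>2) / \<tau>\<^sup>2\<rceil>"
  define g where "g s = idx_order M (w r) ! (s * G)" for s
  note params = parameter_choice[OF k2 budget, folded \<tau>_def d_def, folded t_def G_def L_def R_def]
  note spaced = spaced_halving_indices[OF params(1,2,3,5,6,7) Ct, folded g_def]
  define \<delta> where "\<delta> = \<bar>w r (g (L - 1))\<bar> / 2"
  have \<delta>: "0 < \<delta>" using spaced(4)[OF params(4)] by (simp add: \<delta>_def)
  have wt_g: "wt r (g s) = w r (g s)" if "s < L" for s using spaced(1) that by (simp add: wt_def truncate_def)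
  have first_moment: "measure_pmf.expectation (D b) (\<lambda>x. of_bool (x r) :: real) =
                      measure_pmf.expectation (D False) (\<lambda>x. of_bool (x r))"
    using moments[rule_format, of "{#r#}"] r by (cases b) simp_all
  have "\<bar>measure_pmf.expectation (E b) ht - measure_pmf.expectation (E b) h\<bar>
     \<le> (2 + 2 * real d) * (\<Sum>j<M. (a j)\<^sup>2) / \<delta>\<^sup>2 + (1 - 1 / (real k)\<^sup>2 / 2) ^ L"
    unfolding E_def ht_def h_def \<theta>t_def a_def
  proof (rule threshold_shift_bound[where g=g])
    show "2 * \<bar>wt r (g (Suc s))\<bar> \<le> \<bar>wt r (g s)\<bar>" if "Suc s < L" for s
      using spaced(3) that wt_g[of s] wt_g[of "Suc s"] by simp
    show "2 * \<delta> \<le> \<bar>wt r (g (L - 1))\<bar>" using wt_g[of "L - 1"] params(4) by (simp add: \<delta>_def)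
  qed (use k2 inj r \<pi> small first_moment spaced(1,2) \<delta> in \<open>auto simp: wt_def\<close>)
  also have "(2 + 2 * real d) * (\<Sum>j<M. (a j)\<^sup>2) / \<delta>\<^sup>2 \<le> (2 + 2 * real d) * (4 * (1 - \<tau>\<^sup>2) ^ R / \<tau>\<^sup>2)"
  proof -
    have "(\<Sum>j<M. (a j)\<^sup>2) \<le> (1 - \<tau>\<^sup>2) ^ R * (2 * \<delta>)\<^sup>2 / \<tau>\<^sup>2"
      using spaced(5)[OF params(4)] by (simp add: a_def wt_def \<delta>_def)
    then have "(\<Sum>j<M. (a j)\<^sup>2) / \<delta>\<^sup>2 \<le> 4 * (1 - \<tau>\<^sup>2) ^ R / \<tau>\<^sup>2"
      using \<delta> by (simp add: divide_le_eq power_mult_distrib field_simps)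
    then show ?thesis by (simp add: mult_left_mono flip: times_divide_eq_right)
  qed
  finally show "\<bar>measure_pmf.expectation (E b) ht - measure_pmf.expectation (E b) h\<bar> \<le> 1 / (real k)\<^sup>2"
    using params(8) by linarith
qed

lemma budget_eventually:
  "\<forall>\<^sub>F k in sequentially.
     (2 * (real k)\<^sup>2 * (ln 2 + 2 * ln (real k)) + 1) * (ln 4 + 26 * ln (real k) + 1)
       + ln 32 + 28 * ln (real k) + real k * ln 4 + 1
     \<le> 4 * (real k)\<^sup>2 * (ln 2 + ln (real k)) * (52 * ln (real k)) + 10 * real k * ln 4"
proof -
  have "\<forall>\<^sub>F x in at_top. (2 * x\<^sup>2 * (ln 2 + 2 * ln x) + 1) * (ln 4 + 26 * ln x + 1)
       + ln 32 + 28 * ln x + x * ln 4 + 1 \<le> 4 * x\<^sup>2 * (ln 2 + ln x) * (52 * ln x) + 10 * x * ln (4::real)"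
    by real_asymp
  then show ?thesis by (rule eventually_compose_filterlim[OF _ filterlim_real_sequentially])
qed

theorem lemma5p9:
  "\<exists>K::nat. \<forall>k\<ge>K. \<forall>(N::nat) (M::nat) (vs::nat \<Rightarrow> nat) (\<pi>::nat \<Rightarrow> nat \<Rightarrow> nat)
      (D::bool \<Rightarrow> (nat \<Rightarrow> bool) pmf) (w::nat \<Rightarrow> nat \<Rightarrow> real) (\<theta>::real) (r::nat).
    (let \<tau> = 1 / (real k)^13;
         d = (4::nat)^k;
         t = (1 / \<tau>\<^sup>2) * (real_of_int (\<lceil>4 * (real k)\<^sup>2 * ln (2 * real k)\<rceil> * \<lceil>4 * ln (1 / \<tau>)\<rceil>)
                           + ln (1 / \<tau>) + 10 * ln (real d));
         E = edge_dist k N M vs \<pi> D;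
         wt = (\<lambda>i. if i = r then truncate (w r) (Bset t M (w r)) else w i);
         a = (\<lambda>j. w r j - wt r j);
         \<theta>t = \<theta> - measure_pmf.expectation (E False) (\<lambda>y. ip M a (y (vs r)));
         h = (\<lambda>y. sgn01 ((\<Sum>i<k. ip M (w i) (y (vs i))) - \<theta>));
         ht = (\<lambda>y. sgn01 ((\<Sum>i<k. ip M (wt i) (y (vs i))) - \<theta>t))
     in
     inj_on vs {..<k} \<longrightarrow>
     (\<forall>i<k. \<forall>j<M. \<pi> i j < N) \<longrightarrow>
     (\<forall>b. set_pmf (D b) \<subseteq> {x. \<forall>i\<ge>k. \<not> x i}) \<longrightarrow>
     (\<forall>S::nat multiset. set_mset S \<subseteq> {..<k} \<and> size S \<le> 4 \<longrightarrow>
        measure_pmf.expectation (D False) (\<lambda>x. \<Prod>i\<in>#S. of_bool (x i) :: real) =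
        measure_pmf.expectation (D True) (\<lambda>x. \<Prod>i\<in>#S. of_bool (x i) :: real)) \<longrightarrow>
     (\<forall>i<k. \<forall>l<N. card {j\<in>{..<M}. \<pi> i j = l} \<le> d) \<longrightarrow>
     r < k \<longrightarrow>
     real (card (Cset \<tau> M (w r))) \<ge> t \<longrightarrow>
     (\<forall>b. \<bar>measure_pmf.expectation (E b) ht - measure_pmf.expectation (E b) h\<bar> \<le> 1 / (real k)\<^sup>2))"
proof -
  obtain K0 where K0: "\<And>k. K0 \<le> k \<Longrightarrow>
      (2 * (real k)\<^sup>2 * (ln 2 + 2 * ln (real k)) + 1) * (ln 4 + 26 * ln (real k) + 1)
        + ln 32 + 28 * ln (real k) + real k * ln 4 + 1
      \<le> 4 * (real k)\<^sup>2 * (ln 2 + ln (real k)) * (52 * ln (real k)) + 10 * real k * ln 4"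
    using budget_eventually unfolding eventually_sequentially by blast
  show ?thesis
    unfolding Let_def
    by (intro exI[of _ "max K0 2"] allI impI, rule truncation_changes_little[rule_format]) (use K0 in auto)
qed

end
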